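(* Let $f=f(\rho,u)$ be smooth with $f_u\le0$ on $[0,\infty)\times\mathbb{R}$, let $(\rho_0,u_0)\in C^1_b(\mathbb{R})\times C^2_b(\mathbb{R})$ with $\rho_0\ge0$ and $e_0=u_0'+\rho_0\ge0$ on $\mathbb{R}$, and let $(\rho,u)$ be a classical solution of $(S_f)$ on $[0,T)$ that is smooth enough that $\xi:=\rho_x$ and $\eta:=e_x$ (with $e=u_x+\rho$) are $C^1$ and bounded on $[0,t]\times\mathbb{R}$ for each $t<T$. (1) If $\rho_0'\ge0$ and $e_0'=u_0''+\rho_0'\ge0$ on $\mathbb{R}$, and $(\rho f)_{\rho\rho}\ge0$, $f_{uu}\le0$ on $[0,\infty)\times\mathbb{R}$, then $\xi\ge0$ and $\eta\ge0$ on $[0,T)\times\mathbb{R}$, and $\xi$ is bounded above on $[0,t]\times\mathbb{R}$ for each $t<T$ by a bound not depending on the a priori bounds of $\xi$. (2) If $\rho_0'\le0$ and $u_0''+\rho_0'\le0$ on $\mathbb{R}$, and $(\rho f)_{\rho\rho}\le0$, $f_{uu}\ge0$ on $[0,\infty)\times\mathbb{R}$, then $\xi\le0$ and $\eta\le0$ on $[0,T)\times\mathbb{R}$, and $\xi$ is bounded below on $[0,t]\times\mathbb{R}$ for each $t<T$ by a bound not depending on the a priori bounds of $\xi$.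
   Context: Let $f$ be a smooth real function of $(\rho,u)$; subscripts denote partial derivatives. System $(S_f)$ is: $\rho_t+(\rho f(\rho,u))_x=0$, $u_t+uu_x=\rho\,(f(\rho,u)-u)$ for $x\in\mathbb{R}$, $t>0$, with $\rho(0,x)=\rho_0(x)\ge0$, $u(0,x)=u_0(x)$. A classical solution on $[0,T)$ is a pair $\rho,u\in C^1([0,T)\times\mathbb{R})$ satisfying the equations pointwise and the initial data, such that $\rho,u,\rho_x,u_x$ are bounded on $[0,t]\times\mathbb{R}$ for every $t<T$. We write $e:=u_x+\rho$, $e_0:=u_0'+\rho_0$. $C^k_b(\mathbb{R})$ denotes bounded $C^k$ functions with bounded derivatives up to order $k$. *)

theory Defs
  imports "HOL-Analysis.Analysis"
begin

definition pt :: "(real \<Rightarrow> real \<Rightarrow> real) \<Rightarrow> real \<Rightarrow> real \<Rightarrow> real" where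
  "pt g t x = deriv (\<lambda>s. g s x) t"

definition px :: "(real \<Rightarrow> real \<Rightarrow> real) \<Rightarrow> real \<Rightarrow> real \<Rightarrow> real" where
  "px g t x = deriv (\<lambda>y. g t y) x"

definition C1_on :: "(real \<times> real) set \<Rightarrow> (real \<Rightarrow> real \<Rightarrow> real) \<Rightarrow> bool" where
  "C1_on S g \<longleftrightarrow> (\<exists>gt gx :: real \<Rightarrow> real \<Rightarrow> real.
      continuous_on S (\<lambda>(t,x). gt t x) \<and> continuous_on S (\<lambda>(t,x). gx t x) \<and>
      (\<forall>(t,x)\<in>S. ((\<lambda>(s,y). g s y) has_derivative (\<lambda>(a,b). a * gt t x + b * gx t x))
                     (at (t,x) within S)))"

definition smooth2 :: "(real \<Rightarrow> real \<Rightarrow> real) \<Rightarrow> bool" where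
  "smooth2 f \<longleftrightarrow> (\<exists>D :: nat \<Rightarrow> nat \<Rightarrow> real \<Rightarrow> real \<Rightarrow> real. D 0 0 = f \<and>
      (\<forall>i j. continuous_on UNIV (\<lambda>(r,v). D i j r v) \<and>
        (\<forall>r v. ((\<lambda>s. D i j s v) has_real_derivative D (Suc i) j r v) (at r) \<and>
               ((\<lambda>w. D i j r w) has_real_derivative D i (Suc j) r v) (at v))))"

definition C1b :: "(real \<Rightarrow> real) \<Rightarrow> bool" where
  "C1b g \<longleftrightarrow> (\<forall>x. g differentiable (at x)) \<and> continuous_on UNIV (deriv g) \<and>
              bounded (range g) \<and> bounded (range (deriv g))"

definition C2b :: "(real \<Rightarrow> real) \<Rightarrow> bool" where
  "C2b g \<longleftrightarrow> C1b g \<and> C1b (deriv g)"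

definition classical_solution ::
  "(real \<Rightarrow> real \<Rightarrow> real) \<Rightarrow> real \<Rightarrow> (real \<Rightarrow> real) \<Rightarrow> (real \<Rightarrow> real)
   \<Rightarrow> (real \<Rightarrow> real \<Rightarrow> real) \<Rightarrow> (real \<Rightarrow> real \<Rightarrow> real) \<Rightarrow> bool" where
  "classical_solution f T rho0 u0 rho u \<longleftrightarrow>
     C1_on ({0..<T} \<times> UNIV) rho \<and> C1_on ({0..<T} \<times> UNIV) u \<and>
     (\<forall>x. rho 0 x = rho0 x \<and> u 0 x = u0 x) \<and>
     (\<forall>t\<in>{0<..<T}. \<forall>x.
        pt rho t x + px (\<lambda>s y. rho s y * f (rho s y) (u s y)) t x = 0 \<and>
        pt u t x + u t x * px u t x = rho t x * (f (rho t x) (u t x) - u t x)) \<and>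
     (\<forall>t<T. \<exists>B. \<forall>s\<in>{0..t}. \<forall>x.
        \<bar>rho s x\<bar> \<le> B \<and> \<bar>u s x\<bar> \<le> B \<and> \<bar>px rho s x\<bar> \<le> B \<and> \<bar>px u s x\<bar> \<le> B)"

definition efun :: "(real \<Rightarrow> real \<Rightarrow> real) \<Rightarrow> (real \<Rightarrow> real \<Rightarrow> real) \<Rightarrow> real \<Rightarrow> real \<Rightarrow> real" where
  "efun rho u t x = px u t x + rho t x"

definition extra_regular :: "real \<Rightarrow> (real \<Rightarrow> real \<Rightarrow> real) \<Rightarrow> (real \<Rightarrow> real \<Rightarrow> real) \<Rightarrow> bool" where
  "extra_regular T rho u \<longleftrightarrow>
     (\<forall>t\<in>{0..<T}. \<forall>x. (\<lambda>y. efun rho u t y) differentiable (at x)) \<and>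
     C1_on ({0..<T} \<times> UNIV) (px rho) \<and> C1_on ({0..<T} \<times> UNIV) (px (efun rho u)) \<and>
     (\<forall>t<T. \<exists>B. \<forall>s\<in>{0..t}. \<forall>x. \<bar>px rho s x\<bar> \<le> B \<and> \<bar>px (efun rho u) s x\<bar> \<le> B)"

end

theory Submission
  imports Defs
begin

(* Differentiating the system in x, xi = rho_x and eta = e_x solve transport equations whose
   source terms, at a point where sigma*xi or sigma*eta (sigma = 1 or -1) first reaches zero, have
   the right sign: this uses f_u <= 0, rho >= 0, e >= 0 and the sign conditions on f_uu and
   (rho f)_rhorho.  A minimum principle on [0,t] x R, proved by touching the function from below
   with eps*exp(L s)*sqrt(1 + x^2), therefore propagates rho >= 0 and e >= 0, and then
   sigma*xi >= 0 and sigma*eta >= 0, from the initial data.  Applied to Phi(s) - sigma*xi with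
   Phi' = (2K+1)(Phi+1), the same principle bounds sigma*xi from above: the quadratic term
   -sigma (rho f)_rhorho xi^2 has a favourable sign, and since sigma*xi >= 0 its remaining
   coefficients are bounded by a K depending only on bounds for rho, u, u_x and eta. *)

section \<open>Calculus in two variables\<close>

lemma MVT_abs:
  fixes f f' :: "real \<Rightarrow> real"
  assumes "\<And>y. \<bar>y - x\<bar> \<le> \<bar>h\<bar> \<Longrightarrow> (f has_real_derivative f' y) (at y)"
  shows "\<exists>z. \<bar>z - x\<bar> \<le> \<bar>h\<bar> \<and> f (x + h) - f x = h * f' z"
proof (cases h "0::real" rule: linorder_cases)
  case less
  then obtain z where "x + h < z" "z < x" "f x - f (x + h) = (x - (x + h)) * f' z"
    using MVT2[of "x + h" x f f'] assms by force
  then show ?thesis using less by (intro exI[of _ z]) (auto simp: algebra_simps)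
next
  case greater
  then obtain z where "x < z" "z < x + h" "f (x + h) - f x = (x + h - x) * f' z"
    using MVT2[of x "x + h" f f'] assms by force
  then show ?thesis using greater by (intro exI[of _ z]) auto
qed (auto intro: exI[of _ x])

lemma second_difference_MVT:
  fixes F Fx G :: "real \<Rightarrow> real \<Rightarrow> real"
  assumes Fx: "\<And>s y. \<bar>s - t\<bar> \<le> \<bar>k\<bar> \<Longrightarrow> \<bar>y - x\<bar> \<le> \<bar>h\<bar> \<Longrightarrow>
      ((\<lambda>y'. F s y') has_real_derivative Fx s y) (at y)"
    and G: "\<And>s y. \<bar>s - t\<bar> \<le> \<bar>k\<bar> \<Longrightarrow> \<bar>y - x\<bar> \<le> \<bar>h\<bar> \<Longrightarrow>
      ((\<lambda>s'. Fx s' y) has_real_derivative G s y) (at s)"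
  shows "\<exists>w z. \<bar>w - t\<bar> \<le> \<bar>k\<bar> \<and> \<bar>z - x\<bar> \<le> \<bar>h\<bar> \<and>
    F (t + k) (x + h) - F (t + k) x - F t (x + h) + F t x = h * k * G w z"
proof -
  have "\<exists>z. \<bar>z - x\<bar> \<le> \<bar>h\<bar> \<and>
      (F (t + k) (x + h) - F t (x + h)) - (F (t + k) x - F t x) = h * (Fx (t + k) z - Fx t z)"
    by (rule MVT_abs[of x h "\<lambda>y. F (t + k) y - F t y"]) (auto intro!: DERIV_diff Fx)
  then obtain z where z: "\<bar>z - x\<bar> \<le> \<bar>h\<bar>"
    and hz: "(F (t + k) (x + h) - F t (x + h)) - (F (t + k) x - F t x) = h * (Fx (t + k) z - Fx t z)"
    by blast
  obtain w where w: "\<bar>w - t\<bar> \<le> \<bar>k\<bar>" and kw: "Fx (t + k) z - Fx t z = k * G w z"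
    using MVT_abs[of t k "\<lambda>s. Fx s z" "\<lambda>s. G s z"] G z by auto
  show ?thesis
    using w z hz kw by (intro exI[of _ w] exI[of _ z]) (simp add: algebra_simps)
qed

lemma continuous_at_box:
  fixes G :: "real \<Rightarrow> real \<Rightarrow> real"
  assumes "continuous (at (t, x)) (\<lambda>p. G (fst p) (snd p))" "e > 0"
  obtains \<delta> where "\<delta> > 0" "\<And>s y. \<bar>s - t\<bar> < \<delta> \<Longrightarrow> \<bar>y - x\<bar> < \<delta> \<Longrightarrow> \<bar>G s y - G t x\<bar> < e"
proof -
  obtain d where d: "d > 0" and dd: "\<And>p. dist p (t, x) < d \<Longrightarrow> \<bar>G (fst p) (snd p) - G t x\<bar> < e"
    using assms unfolding continuous_at_eps_delta dist_real_def by fastforce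
  have "\<bar>G s y - G t x\<bar> < e" if "\<bar>s - t\<bar> < d/2" "\<bar>y - x\<bar> < d/2" for s y
  proof -
    have "dist (s, y) (t, x) \<le> dist s t + dist y x"
      unfolding dist_Pair_Pair by (rule sqrt_sum_squares_le_sum_abs[of "dist s t" "dist y x", simplified])
    also have "\<dots> < d" using that by (simp add: dist_real_def)
    finally show ?thesis using dd[of "(s, y)"] by simp
  qed
  then show ?thesis using that[of "d/2"] d by simp
qed

lemma mixed_partials_commute:
  fixes F Ft Fx G :: "real \<Rightarrow> real \<Rightarrow> real"
  assumes "0 < d"
    and Ft: "\<And>s y. \<bar>s - t\<bar> < d \<Longrightarrow> \<bar>y - x\<bar> < d \<Longrightarrow> ((\<lambda>s'. F s' y) has_real_derivative Ft s y) (at s)"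
    and Fx: "\<And>s y. \<bar>s - t\<bar> < d \<Longrightarrow> \<bar>y - x\<bar> < d \<Longrightarrow> ((\<lambda>y'. F s y') has_real_derivative Fx s y) (at y)"
    and G: "\<And>s y. \<bar>s - t\<bar> < d \<Longrightarrow> \<bar>y - x\<bar> < d \<Longrightarrow> ((\<lambda>s'. Fx s' y) has_real_derivative G s y) (at s)"
    and G_cont: "continuous (at (t, x)) (\<lambda>p. G (fst p) (snd p))"
  shows "((\<lambda>y. Ft t y) has_real_derivative G t x) (at x)"
  unfolding DERIV_def
proof (rule tendstoI)
  fix e :: real assume "e > 0"
  then obtain \<delta>0 where "\<delta>0 > 0"
    and G_near: "\<And>s y. \<bar>s - t\<bar> < \<delta>0 \<Longrightarrow> \<bar>y - x\<bar> < \<delta>0 \<Longrightarrow> \<bar>G s y - G t x\<bar> < e/2"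
    using continuous_at_box[OF G_cont, of "e/2"] by auto
  define \<delta> where "\<delta> = min \<delta>0 d / 2"
  have \<delta>: "\<delta> > 0" "\<delta> < d" "\<delta> < \<delta>0" using \<open>\<delta>0 > 0\<close> \<open>0 < d\<close> by (auto simp: \<delta>_def)
  have "\<bar>(Ft t (x + h) - Ft t x) / h - G t x\<bar> < e" if h: "h \<noteq> 0" "\<bar>h\<bar> < \<delta>" for h
  proof -
    define \<Delta> where "\<Delta> k = (F (t + k) (x + h) - F (t + k) x - F t (x + h) + F t x) / (h * k)" for k
    have "((\<lambda>k. ((F (t + k) (x + h) - F t (x + h)) / k - (F (t + k) x - F t x) / k) / h)
        \<longlongrightarrow> (Ft t (x + h) - Ft t x) / h) (at 0)"
      using Ft[of t "x + h"] Ft[of t x] h \<delta> \<open>0 < d\<close> unfolding DERIV_def by (intro tendsto_intros) auto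
    moreover have "((F (t + k) (x + h) - F t (x + h)) / k - (F (t + k) x - F t x) / k) / h = \<Delta> k" for k
      by (simp add: \<Delta>_def diff_divide_distrib add_divide_distrib) (simp add: field_simps)
    ultimately have lim: "(\<Delta> \<longlongrightarrow> (Ft t (x + h) - Ft t x) / h) (at 0)" by simp
    have "\<bar>\<Delta> k - G t x\<bar> < e/2" if k: "k \<noteq> 0" "\<bar>k\<bar> < \<delta>" for k
    proof -
      obtain w z where wz: "\<bar>w - t\<bar> \<le> \<bar>k\<bar>" "\<bar>z - x\<bar> \<le> \<bar>h\<bar>"
        and eq: "F (t + k) (x + h) - F (t + k) x - F t (x + h) + F t x = h * k * G w z"
        using second_difference_MVT[of t k x h F Fx G] Fx G k h \<delta> by force
      have "\<Delta> k = G w z" using eq k h by (simp add: \<Delta>_def)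
      then show ?thesis using G_near[of w z] wz k h \<delta> by simp
    qed
    then have "\<forall>\<^sub>F k in at 0. \<bar>\<Delta> k - G t x\<bar> \<le> e/2"
      using \<delta> by (auto simp: eventually_at dist_real_def intro!: exI[of _ \<delta>] less_imp_le)
    moreover have "((\<lambda>k. \<bar>\<Delta> k - G t x\<bar>) \<longlongrightarrow> \<bar>(Ft t (x + h) - Ft t x) / h - G t x\<bar>) (at 0)"
      by (intro tendsto_intros lim)
    ultimately have "\<bar>(Ft t (x + h) - Ft t x) / h - G t x\<bar> \<le> e/2"
      by (intro tendsto_upperbound) auto
    then show ?thesis using \<open>e > 0\<close> by simp
  qed
  moreover have "\<forall>\<^sub>F h in at (0::real). h \<noteq> 0 \<and> \<bar>h\<bar> < \<delta>"
    using \<delta> by (auto simp: eventually_at dist_real_def intro!: exI[of _ \<delta>])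
  ultimately show "\<forall>\<^sub>F h in at 0. dist ((Ft t (x + h) - Ft t x) / h) (G t x) < e"
    using \<open>e > 0\<close> by (auto elim!: eventually_mono simp: dist_real_def)
qed

lemma mixed_partials_commute':
  fixes F Ft Fx G :: "real \<Rightarrow> real \<Rightarrow> real"
  assumes "0 < d"
    and "\<And>s y. \<bar>s - t\<bar> < d \<Longrightarrow> \<bar>y - x\<bar> < d \<Longrightarrow> ((\<lambda>s'. F s' y) has_real_derivative Ft s y) (at s)"
    and "\<And>s y. \<bar>s - t\<bar> < d \<Longrightarrow> \<bar>y - x\<bar> < d \<Longrightarrow> ((\<lambda>y'. F s y') has_real_derivative Fx s y) (at y)"
    and "\<And>s y. \<bar>s - t\<bar> < d \<Longrightarrow> \<bar>y - x\<bar> < d \<Longrightarrow> ((\<lambda>y'. Ft s y') has_real_derivative G s y) (at y)"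
    and G_cont: "continuous (at (t, x)) (\<lambda>p. G (fst p) (snd p))"
  shows "((\<lambda>s. Fx s x) has_real_derivative G t x) (at t)"
proof -
  have "continuous (at (x, t)) ((\<lambda>p. G (fst p) (snd p)) \<circ> (\<lambda>p. (snd p, fst p)))"
    using G_cont by (intro continuous_at_compose) (auto intro: continuous_intros)
  then show ?thesis
    using mixed_partials_commute[of d x t "\<lambda>y s. F s y" "\<lambda>y s. Fx s y" "\<lambda>y s. Ft s y" "\<lambda>y s. G s y"] assms
    by (simp add: o_def)
qed

lemma has_derivative_of_partials:
  fixes h hr hv :: "real \<Rightarrow> real \<Rightarrow> real"
  assumes "\<And>r v. ((\<lambda>s. h s v) has_real_derivative hr r v) (at r)"
    and "\<And>r v. ((\<lambda>w. h r w) has_real_derivative hv r v) (at v)"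
    and "continuous_on UNIV (\<lambda>(r, v). hv r v)"
  shows "((\<lambda>(r, v). h r v) has_derivative (\<lambda>(a, b). a * hr r v + b * hv r v)) (at (r, v))"
proof -
  have fst: "((\<lambda>s. h s v) has_derivative (*) (hr r v)) (at r within UNIV)"
    using assms(1)[where r=r and v=v] by (simp add: has_field_derivative_def)
  have snd: "((\<lambda>w. h x w) has_derivative blinfun_apply (blinfun_mult_left (hv x y))) (at y within UNIV)"
    for x y using assms(2)[where r=x and v=y, unfolded has_field_derivative_def]
    by (rule has_derivative_eq_rhs) (auto simp: fun_eq_iff)
  have "continuous (at (r, v) within UNIV \<times> UNIV) (\<lambda>p. blinfun_mult_left ((\<lambda>(x, y). hv x y) p))"
    using assms(3) by (intro bounded_linear.continuous[OF bounded_linear_blinfun_mult_left])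
      (simp add: continuous_on_eq_continuous_within)
  then have "continuous (at (r, v) within UNIV \<times> UNIV) (\<lambda>(x, y). blinfun_mult_left (hv x y))"
    by (simp add: case_prod_beta')
  from has_derivative_partialsI[OF fst snd this] show ?thesis
    by (auto elim: has_derivative_eq_rhs simp: fun_eq_iff)
qed

lemma DERIV_compose_partials:
  fixes h hr hv :: "real \<Rightarrow> real \<Rightarrow> real" and p q :: "real \<Rightarrow> real"
  assumes "\<And>r v. ((\<lambda>s. h s v) has_real_derivative hr r v) (at r)"
    and "\<And>r v. ((\<lambda>w. h r w) has_real_derivative hv r v) (at v)"
    and "continuous_on UNIV (\<lambda>(r, v). hv r v)"
    and p: "(p has_real_derivative p') (at x within S)"
    and q: "(q has_real_derivative q') (at x within S)"
  shows "((\<lambda>y. h (p y) (q y)) has_real_derivative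
           (p' * hr (p x) (q x) + q' * hv (p x) (q x))) (at x within S)"
proof -
  have "((\<lambda>y. (p y, q y)) has_derivative (\<lambda>d. (p' * d, q' * d))) (at x within S)"
    using p q unfolding has_field_derivative_def by (intro has_derivative_Pair)
  from has_derivative_compose[OF this has_derivative_of_partials[OF assms(1-3)]]
  have "((\<lambda>y. h (p y) (q y)) has_derivative
      (\<lambda>d. p' * d * hr (p x) (q x) + q' * d * hv (p x) (q x))) (at x within S)"
    by simp
  then show ?thesis
    unfolding has_field_derivative_def by (rule has_derivative_eq_rhs) (auto simp: fun_eq_iff algebra_simps)
qed

definition smooth_partials :: "(nat \<Rightarrow> nat \<Rightarrow> real \<Rightarrow> real \<Rightarrow> real) \<Rightarrow> bool" where
  "smooth_partials D \<longleftrightarrow> (\<forall>i j. continuous_on UNIV (\<lambda>(r, v). D i j r v) \<and>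
     (\<forall>r v. ((\<lambda>s. D i j s v) has_real_derivative D (Suc i) j r v) (at r) \<and>
            ((\<lambda>w. D i j r w) has_real_derivative D i (Suc j) r v) (at v)))"

lemma smooth2_obtain_partials:
  assumes "smooth2 f"
  obtains D where "D 0 0 = f" "smooth_partials D"
  using assms unfolding smooth2_def smooth_partials_def by blast

context
  fixes D :: "nat \<Rightarrow> nat \<Rightarrow> real \<Rightarrow> real \<Rightarrow> real"
  assumes D: "smooth_partials D"
begin

lemma smooth_partials_DERIV_fst: "((\<lambda>s. D i j s v) has_real_derivative D (Suc i) j r v) (at r)"
  and smooth_partials_DERIV_snd: "((\<lambda>w. D i j r w) has_real_derivative D i (Suc j) r v) (at v)"
  and smooth_partials_continuous: "continuous_on UNIV (\<lambda>(r, v). D i j r v)"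
  using D unfolding smooth_partials_def by blast+

lemma smooth_partials_chain:
  assumes "(p has_real_derivative p') (at x within S)" "(q has_real_derivative q') (at x within S)"
  shows "((\<lambda>y. D i j (p y) (q y)) has_real_derivative
           (p' * D (Suc i) j (p x) (q x) + q' * D i (Suc j) (p x) (q x))) (at x within S)"
  using DERIV_compose_partials[OF smooth_partials_DERIV_fst smooth_partials_DERIV_snd
      smooth_partials_continuous assms] .

lemma deriv_snd_partial: "deriv (\<lambda>w. D i j r w) v = D i (Suc j) r v"
  by (rule DERIV_imp_deriv[OF smooth_partials_DERIV_snd])

lemma deriv2_flux_partial: "deriv (\<lambda>s. deriv (\<lambda>q. q * D 0 0 q v) s) r = 2 * D 1 0 r v + r * D 2 0 r v"
proof -
  have "deriv (\<lambda>q. q * D 0 0 q v) s = D 0 0 s v + s * D 1 0 s v" for s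
    by (rule DERIV_imp_deriv, rule DERIV_cong[OF DERIV_mult[OF DERIV_ident smooth_partials_DERIV_fst]])
      (simp add: algebra_simps)
  moreover have "((\<lambda>s. D 0 0 s v + s * D 1 0 s v) has_real_derivative 2 * D 1 0 r v + r * D 2 0 r v) (at r)"
    by (rule DERIV_cong[OF DERIV_add[OF smooth_partials_DERIV_fst
          DERIV_mult[OF DERIV_ident smooth_partials_DERIV_fst]]])
      (simp add: algebra_simps numeral_2_eq_2)
  ultimately show ?thesis by (simp add: DERIV_imp_deriv)
qed

end

lemma continuous_bounded_on_square:
  fixes h :: "real \<Rightarrow> real \<Rightarrow> real"
  assumes "continuous_on UNIV (\<lambda>(r, v). h r v)"
  obtains C where "\<And>r v. \<bar>r\<bar> \<le> M \<Longrightarrow> \<bar>v\<bar> \<le> M \<Longrightarrow> \<bar>h r v\<bar> \<le> C"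
proof -
  have "compact ((\<lambda>(r, v). h r v) ` cbox (-M, -M) (M, M))"
    using assms by (intro compact_continuous_image compact_cbox) (rule continuous_on_subset, auto)
  then have "bounded ((\<lambda>(r, v). h r v) ` cbox (-M, -M) (M, M))" by (rule compact_imp_bounded)
  then obtain C where C: "\<And>z. z \<in> (\<lambda>(r, v). h r v) ` cbox (-M, -M) (M, M) \<Longrightarrow> norm z \<le> C"
    unfolding bounded_iff by blast
  show ?thesis
  proof (rule that)
    fix r v :: real assume "\<bar>r\<bar> \<le> M" "\<bar>v\<bar> \<le> M"
    then have "(r, v) \<in> cbox (-M, -M) (M, M)" by (auto simp: cbox_Pair_iff)
    then show "\<bar>h r v\<bar> \<le> C" using C[of "h r v"] by force
  qed
qed

abbreviation continuous_on2 :: "(real \<times> real) set \<Rightarrow> (real \<Rightarrow> real \<Rightarrow> real) \<Rightarrow> bool" where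
  "continuous_on2 S X \<equiv> continuous_on S (\<lambda>p. X (fst p) (snd p))"

lemma C1_on_strip_partials:
  fixes g :: "real \<Rightarrow> real \<Rightarrow> real"
  assumes "C1_on ({0..<T} \<times> UNIV) g"
  obtains gt gx where
    "continuous_on2 ({0..<T} \<times> UNIV) gt" "continuous_on2 ({0..<T} \<times> UNIV) gx"
    "continuous_on2 ({0..<T} \<times> UNIV) g"
    "\<And>t x. 0 \<le> t \<Longrightarrow> t < T \<Longrightarrow> ((\<lambda>y. g t y) has_real_derivative gx t x) (at x)"
    "\<And>t x. 0 < t \<Longrightarrow> t < T \<Longrightarrow> ((\<lambda>s. g s x) has_real_derivative gt t x) (at t)"
proof -
  let ?S = "{0..<T} \<times> (UNIV::real set)"
  obtain gt gx where cgt: "continuous_on ?S (\<lambda>(t, x). gt t x)"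
    and cgx: "continuous_on ?S (\<lambda>(t, x). gx t x)"
    and der0: "\<forall>(t, x)\<in>?S.
      ((\<lambda>(s, y). g s y) has_derivative (\<lambda>(a, b). a * gt t x + b * gx t x)) (at (t, x) within ?S)"
    using assms unfolding C1_on_def by blast
  have der: "((\<lambda>(s, y). g s y) has_derivative
      (\<lambda>(a, b). a * gt (fst p) (snd p) + b * gx (fst p) (snd p))) (at p within ?S)" if "p \<in> ?S" for p
    using der0 that by (cases p) auto
  have "continuous_on2 ?S gt" "continuous_on2 ?S gx"
    using cgt cgx by (simp_all add: case_prod_beta')
  moreover have "continuous_on2 ?S g"
    using der[THEN has_derivative_continuous] 
    unfolding continuous_on_eq_continuous_within by (simp add: case_prod_beta')
  moreover have "((\<lambda>y. g t y) has_real_derivative gx t x) (at x)" if "0 \<le> t" "t < T" for t x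
  proof -
    have "((\<lambda>y. (t, y)) has_derivative (\<lambda>b. (0, b))) (at x within UNIV)"
      by (auto intro!: derivative_eq_intros)
    from has_derivative_in_compose2[OF der _ _ this] that
    have "((\<lambda>y. g t y) has_derivative (\<lambda>b. b * gx t x)) (at x)" by force
    then show ?thesis
      unfolding has_field_derivative_def by (rule has_derivative_eq_rhs) (simp add: fun_eq_iff)
  qed
  moreover have "((\<lambda>s. g s x) has_real_derivative gt t x) (at t)" if "0 < t" "t < T" for t x
  proof -
    have "{0<..<T} \<times> UNIV \<subseteq> interior ?S"
      by (rule interior_maximal) (auto intro: open_Times)
    then have "at (t, x) within ?S = at (t, x)"
      using that by (intro at_within_interior) auto
    then have dg: "((\<lambda>(s, y). g s y) has_derivative (\<lambda>(a, b). a * gt t x + b * gx t x)) (at (t, x))"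
      using der[of "(t, x)"] that by simp
    have "((\<lambda>s. (s, x)) has_derivative (\<lambda>a. (a, 0))) (at t)"
      by (auto intro!: derivative_eq_intros)
    from has_derivative_compose[OF this dg]
    have "((\<lambda>s. g s x) has_derivative (\<lambda>a. a * gt t x)) (at t)" by simp
    then show ?thesis
      unfolding has_field_derivative_def by (rule has_derivative_eq_rhs) (simp add: fun_eq_iff)
  qed
  ultimately show ?thesis using that by blast
qed

lemma C1_on_strip:
  fixes g :: "real \<Rightarrow> real \<Rightarrow> real"
  assumes "C1_on ({0..<T} \<times> UNIV) g"
  shows "continuous_on2 ({0..<T} \<times> UNIV) g"
    and "continuous_on2 ({0..<T} \<times> UNIV) (px g)"
    and "continuous_on2 ({0<..<T} \<times> UNIV) (pt g)"
    and "0 \<le> t \<Longrightarrow> t < T \<Longrightarrow> ((\<lambda>y. g t y) has_real_derivative px g t x) (at x)"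
    and "0 < t \<Longrightarrow> t < T \<Longrightarrow> ((\<lambda>s. g s x) has_real_derivative pt g t x) (at t)"
proof -
  obtain gt gx where cgt: "continuous_on2 ({0..<T} \<times> UNIV) gt"
    and cgx: "continuous_on2 ({0..<T} \<times> UNIV) gx" and "continuous_on2 ({0..<T} \<times> UNIV) g"
    and dx: "\<And>t x. 0 \<le> t \<Longrightarrow> t < T \<Longrightarrow> ((\<lambda>y. g t y) has_real_derivative gx t x) (at x)"
    and dt: "\<And>t x. 0 < t \<Longrightarrow> t < T \<Longrightarrow> ((\<lambda>s. g s x) has_real_derivative gt t x) (at t)"
    using C1_on_strip_partials[OF assms] by blast
  have px_eq: "px g t x = gx t x" if "0 \<le> t" "t < T" for t x
    unfolding px_def using dx[OF that] by (rule DERIV_imp_deriv)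
  have pt_eq: "pt g t x = gt t x" if "0 < t" "t < T" for t x
    unfolding pt_def using dt[OF that] by (rule DERIV_imp_deriv)
  show "continuous_on2 ({0..<T} \<times> UNIV) g" by fact
  show "continuous_on2 ({0..<T} \<times> UNIV) (px g)"
    using cgx by (rule continuous_on_cong[THEN iffD1, OF refl, rotated]) (auto simp: px_eq)
  show "continuous_on2 ({0<..<T} \<times> UNIV) (pt g)"
    using continuous_on_subset[OF cgt, of "{0<..<T} \<times> UNIV"]
    by (rule continuous_on_cong[THEN iffD1, OF refl, rotated]) (auto simp: pt_eq)
  show "0 \<le> t \<Longrightarrow> t < T \<Longrightarrow> ((\<lambda>y. g t y) has_real_derivative px g t x) (at x)"
    using dx px_eq by simp
  show "0 < t \<Longrightarrow> t < T \<Longrightarrow> ((\<lambda>s. g s x) has_real_derivative pt g t x) (at t)"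
    using dt pt_eq by simp
qed

lemma continuous_on2_open_strip_at:
  assumes "continuous_on2 ({0<..<T} \<times> UNIV) X" "0 < t" "t < T"
  shows "continuous (at (t, x)) (\<lambda>p. X (fst p) (snd p))"
  using assms continuous_on_eq_continuous_at[OF open_Times[OF open_greaterThanLessThan open_UNIV]]
  by fastforce

lemma abs_mult_bound: "\<bar>a\<bar> \<le> A \<Longrightarrow> \<bar>b\<bar> \<le> B \<Longrightarrow> \<bar>a * b\<bar> \<le> A * (B::real)"
  by (simp add: abs_mult mult_mono')

section \<open>A minimum principle on a strip\<close>

lemma first_nonpositive_time:
  fixes W :: "real \<Rightarrow> real \<Rightarrow> real"
  assumes "0 < t1"
    and W_cont: "continuous_on2 ({0..t1} \<times> UNIV) W"
    and W_init: "\<And>x. W 0 x > 0"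
    and W_far: "\<And>s x. s \<in> {0..t1} \<Longrightarrow> \<bar>x\<bar> \<ge> R \<Longrightarrow> W s x > 0"
    and "s0 \<in> {0..t1}" "W s0 x0 \<le> 0"
  obtains m x where "0 < m" "m \<le> t1" "W m x = 0" "\<And>y. W m y \<ge> 0"
    "\<And>s y. 0 \<le> s \<Longrightarrow> s < m \<Longrightarrow> W s y > 0"
proof -
  let ?K = "({0..t1} \<times> {-R..R}) \<inter> (\<lambda>p. W (fst p) (snd p)) -` {..0}"
  have "closed ?K"
    using W_cont by (intro continuous_closed_preimage) (auto intro: continuous_on_subset closed_Times)
  then have "compact ?K"
    using compact_Int_closed[of "{0..t1} \<times> {-R..R}" ?K] by (auto simp: compact_Times Int_absorb1)
  then have "compact (fst ` ?K)" by (intro compact_continuous_image continuous_intros)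
  moreover have "(s0, x0) \<in> ?K"
    using assms(5,6) W_far[of s0 x0] by force
  ultimately obtain m where "m \<in> fst ` ?K" and m_min: "\<And>z. z \<in> fst ` ?K \<Longrightarrow> m \<le> z"
    using compact_attains_inf[of "fst ` ?K"] by blast
  then obtain x where "m \<in> {0..t1}" "W m x \<le> 0" by force
  have before: "W s y > 0" if "0 \<le> s" "s < m" for s y
  proof (rule ccontr)
    assume "\<not> W s y > 0"
    then have "(s, y) \<in> ?K"
      using that \<open>m \<in> {0..t1}\<close> W_far[of s y] by force
    then show False using m_min[of s] that by force
  qed
  have "0 < m"
    using \<open>m \<in> {0..t1}\<close> \<open>W m x \<le> 0\<close> W_init[of x] by (cases "m = 0") auto
  have at_m: "W m y \<ge> 0" for y
  proof -
    have "continuous_on {0..m} (\<lambda>s. (\<lambda>p. W (fst p) (snd p)) (s, y))"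
      by (rule continuous_on_compose2[OF W_cont])
        (use \<open>m \<in> {0..t1}\<close> in \<open>auto intro!: continuous_intros\<close>)
    then have "continuous_on {0..m} (\<lambda>s. W s y)" by simp
    then have "((\<lambda>s. W s y) \<longlongrightarrow> W m y) (at_left m)"
      using \<open>0 < m\<close> by (rule continuous_on_Icc_at_leftD)
    moreover have "\<forall>\<^sub>F s in at_left m. 0 \<le> W s y"
      using \<open>0 < m\<close> before by (intro eventually_at_leftI[of 0]) (auto intro: less_imp_le)
    ultimately show ?thesis by (rule tendsto_lowerbound) simp
  qed
  show ?thesis
  proof (rule that)
    show "W m x = 0" using \<open>W m x \<le> 0\<close> at_m[of x] by simp
  qed (use \<open>0 < m\<close> \<open>m \<in> {0..t1}\<close> at_m before in auto)
qed

definition barrier :: "real \<Rightarrow> real \<Rightarrow> real \<Rightarrow> real" where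
  "barrier L s x = exp (L * s) * sqrt (1 + x\<^sup>2)"

lemma barrier_pos: "barrier L s x > 0"
  unfolding barrier_def by (simp add: add_pos_nonneg)

lemma barrier_ge: "barrier L s x \<ge> exp (L * s) * \<bar>x\<bar>"
  unfolding barrier_def by (intro mult_left_mono) (auto simp: real_le_rsqrt)

lemma barrier_DERIV_t: "((\<lambda>s. barrier L s x) has_real_derivative L * barrier L s x) (at s)"
  unfolding barrier_def by (auto intro!: derivative_eq_intros)

lemma barrier_DERIV_x:
  "((\<lambda>y. barrier L s y) has_real_derivative exp (L * s) * (x / sqrt (1 + x\<^sup>2))) (at x)"
proof -
  have "0 < 1 + x\<^sup>2" by (simp add: add_pos_nonneg)
  then show ?thesis
    unfolding barrier_def by (auto intro!: derivative_eq_intros simp: field_simps)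
qed

lemma abs_barrier_dx_le: "\<bar>exp (L * s) * (x / sqrt (1 + x\<^sup>2))\<bar> \<le> barrier L s x"
proof -
  have "0 \<le> (\<bar>x\<bar> - 1)\<^sup>2" by simp
  then have "\<bar>x\<bar> \<le> sqrt (1 + x\<^sup>2) * sqrt (1 + x\<^sup>2)"
    by (simp add: power2_eq_square algebra_simps abs_mult_self_eq)
  then have "\<bar>x\<bar> / sqrt (1 + x\<^sup>2) \<le> sqrt (1 + x\<^sup>2)"
    by (simp add: divide_le_eq add_pos_nonneg)
  then have "exp (L * s) * (\<bar>x\<bar> / sqrt (1 + x\<^sup>2)) \<le> exp (L * s) * sqrt (1 + x\<^sup>2)"
    by (intro mult_left_mono) auto
  then show ?thesis
    unfolding barrier_def by (simp add: abs_mult)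
qed

lemma barrier_continuous: "continuous_on2 S (barrier L)"
  unfolding barrier_def by (intro continuous_intros)

lemma first_zero_DERIV:
  fixes F :: "real \<Rightarrow> real \<Rightarrow> real"
  assumes "0 < m" "F m x = 0" "\<And>y. F m y \<ge> 0" "\<And>s. 0 \<le> s \<Longrightarrow> s < m \<Longrightarrow> F s x > 0"
    and Fx: "((\<lambda>y. F m y) has_real_derivative a) (at x)"
    and Ft: "((\<lambda>s. F s x) has_real_derivative b) (at m)"
  shows "a = 0" "b \<le> 0"
proof -
  show "a = 0"
    by (rule DERIV_local_min[OF Fx, of 1]) (use assms(2,3) in auto)
  show "b \<le> 0"
  proof (rule ccontr)
    assume "\<not> b \<le> 0"
    then obtain d where "d > 0" and dec: "\<And>h. h > 0 \<Longrightarrow> h < d \<Longrightarrow> F (m - h) x < F m x"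
      using DERIV_pos_inc_left[OF Ft] by force
    define h where "h = min d m / 2"
    have "F (m - h) x < 0" using dec[of h] \<open>d > 0\<close> \<open>0 < m\<close> assms(2) by (simp add: h_def)
    moreover have "F (m - h) x > 0" using assms(4)[of "m - h"] \<open>d > 0\<close> \<open>0 < m\<close> by (simp add: h_def)
    ultimately show False by simp
  qed
qed

lemma barrier_touching:
  fixes A :: "real \<Rightarrow> real \<Rightarrow> real"
  assumes "0 < m"
    and "A m x + \<epsilon> * barrier L m x = 0"
    and "\<And>y. A m y + \<epsilon> * barrier L m y \<ge> 0"
    and "\<And>s. 0 \<le> s \<Longrightarrow> s < m \<Longrightarrow> A s x + \<epsilon> * barrier L s x > 0"
    and "((\<lambda>y. A m y) has_real_derivative Ax) (at x)"
    and "((\<lambda>s. A s x) has_real_derivative At) (at m)"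
  shows "Ax = - \<epsilon> * (exp (L * m) * (x / sqrt (1 + x\<^sup>2)))" "At \<le> - L * (\<epsilon> * barrier L m x)"
  using first_zero_DERIV[of m "\<lambda>s y. A s y + \<epsilon> * barrier L s y" x, OF assms(1-4)
      DERIV_add[OF assms(5) DERIV_cmult[OF barrier_DERIV_x]]
      DERIV_add[OF assms(6) DERIV_cmult[OF barrier_DERIV_t]]]
  by (simp_all add: algebra_simps)

lemma minimum_principle_pair:
  fixes A1 A2 A1x A1t A2x A2t :: "real \<Rightarrow> real \<Rightarrow> real"
  assumes "0 < t1"
    and cont: "continuous_on2 ({0..t1} \<times> UNIV) A1" "continuous_on2 ({0..t1} \<times> UNIV) A2"
    and bounded: "\<And>s x. s \<in> {0..t1} \<Longrightarrow> \<bar>A1 s x\<bar> \<le> B \<and> \<bar>A2 s x\<bar> \<le> B"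
    and init: "\<And>x. A1 0 x \<ge> 0 \<and> A2 0 x \<ge> 0"
    and A1x: "\<And>s x. 0 < s \<Longrightarrow> s \<le> t1 \<Longrightarrow> ((\<lambda>y. A1 s y) has_real_derivative A1x s x) (at x)"
    and A1t: "\<And>s x. 0 < s \<Longrightarrow> s \<le> t1 \<Longrightarrow> ((\<lambda>s'. A1 s' x) has_real_derivative A1t s x) (at s)"
    and A2x: "\<And>s x. 0 < s \<Longrightarrow> s \<le> t1 \<Longrightarrow> ((\<lambda>y. A2 s y) has_real_derivative A2x s x) (at x)"
    and A2t: "\<And>s x. 0 < s \<Longrightarrow> s \<le> t1 \<Longrightarrow> ((\<lambda>s'. A2 s' x) has_real_derivative A2t s x) (at s)"
    and touch1: "\<And>s x a. 0 < s \<Longrightarrow> s \<le> t1 \<Longrightarrow> 0 < a \<Longrightarrow> A1 s x = - a \<Longrightarrow> A2 s x \<ge> - a \<Longrightarrow>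
        \<bar>A1x s x\<bar> \<le> a \<Longrightarrow> A1t s x > - L * a"
    and touch2: "\<And>s x a. 0 < s \<Longrightarrow> s \<le> t1 \<Longrightarrow> 0 < a \<Longrightarrow> A2 s x = - a \<Longrightarrow> A1 s x \<ge> - a \<Longrightarrow>
        \<bar>A2x s x\<bar> \<le> a \<Longrightarrow> A2t s x > - L * a"
    and "s \<in> {0..t1}"
  shows "A1 s x \<ge> 0 \<and> A2 s x \<ge> 0"
proof (rule ccontr)
  assume neg: "\<not> ?thesis"
  define a where "a = min (A1 s x) (A2 s x)"
  have "a < 0" using neg by (auto simp: a_def)
  txt \<open>W below is positive at time 0 and for large x, but not at (s, x); at its first zero the
    growth rate L of the barrier contradicts the touching hypotheses.\<close>
  define \<epsilon> where "\<epsilon> = - a / (2 * barrier L s x)"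
  have "\<epsilon> > 0" using \<open>a < 0\<close> barrier_pos[of L s x] by (simp add: \<epsilon>_def divide_neg_pos)
  define W where "W s y = min (A1 s y + \<epsilon> * barrier L s y) (A2 s y + \<epsilon> * barrier L s y)" for s y
  have W_cont: "continuous_on2 ({0..t1} \<times> UNIV) W"
    unfolding W_def by (intro continuous_intros cont barrier_continuous)
  define c where "c = exp (- \<bar>L\<bar> * t1)"
  have "\<epsilon> * c > 0" using \<open>\<epsilon> > 0\<close> by (simp add: c_def)
  have far: "W s' y > 0" if "s' \<in> {0..t1}" "\<bar>y\<bar> \<ge> (B + 1) / (\<epsilon> * c)" for s' y
  proof -
    have "\<bar>L * s'\<bar> \<le> \<bar>L\<bar> * t1" using that(1) by (auto simp: abs_mult intro: mult_left_mono)
    then have "c \<le> exp (L * s')" unfolding c_def by simp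
    have "B + 1 \<le> \<epsilon> * c * \<bar>y\<bar>"
      using that(2) \<open>\<epsilon> * c > 0\<close> by (simp add: pos_divide_le_eq mult.commute)
    also have "\<dots> \<le> \<epsilon> * (exp (L * s') * \<bar>y\<bar>)"
      using \<open>c \<le> exp (L * s')\<close> \<open>\<epsilon> > 0\<close> by (simp add: mult.assoc mult_right_mono)
    also have "\<dots> \<le> \<epsilon> * barrier L s' y"
      using barrier_ge[of L s' y] \<open>\<epsilon> > 0\<close> by simp
    finally show ?thesis using bounded[OF that(1), of y] unfolding W_def by auto
  qed
  have "W 0 y > 0" for y
    using init[of y] barrier_pos[of L 0 y] \<open>\<epsilon> > 0\<close> unfolding W_def by (simp add: add_nonneg_pos)
  moreover have "W s x \<le> 0"
    using \<open>a < 0\<close> barrier_pos[of L s x] unfolding W_def a_def \<epsilon>_def by (auto simp: min_def)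
  ultimately obtain m z where m: "0 < m" "m \<le> t1" and "W m z = 0" and W_m: "\<And>y. W m y \<ge> 0"
    and W_before: "\<And>s y. 0 \<le> s \<Longrightarrow> s < m \<Longrightarrow> W s y > 0"
    using first_nonpositive_time[OF \<open>0 < t1\<close> W_cont _ far \<open>s \<in> {0..t1}\<close>] by blast
  have a_m: "\<epsilon> * barrier L m z > 0" using \<open>\<epsilon> > 0\<close> barrier_pos[of L m z] by simp
  have dx_bound: "\<bar>- \<epsilon> * (exp (L * m) * (z / sqrt (1 + z\<^sup>2)))\<bar> \<le> \<epsilon> * barrier L m z"
    using mult_left_mono[OF abs_barrier_dx_le[of L m z], of \<epsilon>] \<open>\<epsilon> > 0\<close> by (simp add: abs_mult)
  have ge1: "A1 m y + \<epsilon> * barrier L m y \<ge> 0" and ge2: "A2 m y + \<epsilon> * barrier L m y \<ge> 0" for y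
    using W_m[of y] unfolding W_def by simp_all
  have pos1: "A1 s' z + \<epsilon> * barrier L s' z > 0" and pos2: "A2 s' z + \<epsilon> * barrier L s' z > 0"
    if "0 \<le> s'" "s' < m" for s'
    using W_before[OF that, of z] unfolding W_def by simp_all
  have "A1 m z + \<epsilon> * barrier L m z = 0 \<or> A2 m z + \<epsilon> * barrier L m z = 0"
    using \<open>W m z = 0\<close> unfolding W_def by linarith
  then show False
  proof
    assume zero: "A1 m z + \<epsilon> * barrier L m z = 0"
    from barrier_touching[OF m(1) zero ge1 pos1 A1x[OF m] A1t[OF m]]
    have "\<bar>A1x m z\<bar> \<le> \<epsilon> * barrier L m z" "A1t m z \<le> - L * (\<epsilon> * barrier L m z)"
      using dx_bound by simp_all
    moreover have "A1t m z > - L * (\<epsilon> * barrier L m z)"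
      by (rule touch1[OF m a_m]) (use zero ge2[of z] calculation in auto)
    ultimately show False by simp
  next
    assume zero: "A2 m z + \<epsilon> * barrier L m z = 0"
    from barrier_touching[OF m(1) zero ge2 pos2 A2x[OF m] A2t[OF m]]
    have "\<bar>A2x m z\<bar> \<le> \<epsilon> * barrier L m z" "A2t m z \<le> - L * (\<epsilon> * barrier L m z)"
      using dx_bound by simp_all
    moreover have "A2t m z > - L * (\<epsilon> * barrier L m z)"
      by (rule touch2[OF m a_m]) (use zero ge1[of z] calculation in auto)
    ultimately show False by simp
  qed
qed

corollary minimum_principle:
  fixes A Ax At :: "real \<Rightarrow> real \<Rightarrow> real"
  assumes "0 < t1"
    and "continuous_on2 ({0..t1} \<times> UNIV) A"
    and "\<And>s x. s \<in> {0..t1} \<Longrightarrow> \<bar>A s x\<bar> \<le> B"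
    and "\<And>x. A 0 x \<ge> 0"
    and "\<And>s x. 0 < s \<Longrightarrow> s \<le> t1 \<Longrightarrow> ((\<lambda>y. A s y) has_real_derivative Ax s x) (at x)"
    and "\<And>s x. 0 < s \<Longrightarrow> s \<le> t1 \<Longrightarrow> ((\<lambda>s'. A s' x) has_real_derivative At s x) (at s)"
    and "\<And>s x a. 0 < s \<Longrightarrow> s \<le> t1 \<Longrightarrow> 0 < a \<Longrightarrow> A s x = - a \<Longrightarrow> \<bar>Ax s x\<bar> \<le> a \<Longrightarrow>
        At s x > - L * a"
    and "s \<in> {0..t1}"
  shows "A s x \<ge> 0"
  using minimum_principle_pair[of t1 A A B Ax At Ax At L s x] assms by simp

section \<open>Classical solutions of the system\<close>

locale smooth_solution =
  fixes D :: "nat \<Rightarrow> nat \<Rightarrow> real \<Rightarrow> real \<Rightarrow> real" and T :: real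
    and rho0 u0 :: "real \<Rightarrow> real" and rho u :: "real \<Rightarrow> real \<Rightarrow> real"
  assumes partials: "smooth_partials D"
    and solution: "classical_solution (D 0 0) T rho0 u0 rho u"
    and regular: "extra_regular T rho u"
begin

definition "xi = px rho"
definition "ux = px u"
definition "e = efun rho u"
definition "eta = px e"
definition "xix = px xi"
definition "etax = px eta"
definition "Dsol i j t x = D i j (rho t x) (u t x)"

abbreviation "strip \<equiv> {0..<T} \<times> (UNIV::real set)"
abbreviation "open_strip \<equiv> {0<..<T} \<times> (UNIV::real set)"

lemma solution_C1: "C1_on strip rho" "C1_on strip u" "C1_on strip xi" "C1_on strip eta"
  using solution regular unfolding classical_solution_def extra_regular_def xi_def eta_def e_def
  by blast+

lemmas rho_C1 = C1_on_strip[OF solution_C1(1), folded xi_def]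
lemmas u_C1 = C1_on_strip[OF solution_C1(2), folded ux_def]
lemmas xi_C1 = C1_on_strip[OF solution_C1(3), folded xix_def]
lemmas eta_C1 = C1_on_strip[OF solution_C1(4), folded etax_def]

lemma e_eq: "e t x = ux t x + rho t x"
  unfolding e_def efun_def ux_def by simp

lemma DERIV_e_x: "0 \<le> t \<Longrightarrow> t < T \<Longrightarrow> ((\<lambda>y. e t y) has_real_derivative eta t x) (at x)"
  using regular unfolding extra_regular_def eta_def px_def e_def
  by (simp add: DERIV_deriv_iff_real_differentiable)

lemma DERIV_ux_x:
  assumes "0 \<le> t" "t < T"
  shows "((\<lambda>y. ux t y) has_real_derivative eta t x - xi t x) (at x)"
proof -
  have "((\<lambda>y. e t y - rho t y) has_real_derivative eta t x - xi t x) (at x)"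
    using assms by (intro DERIV_diff DERIV_e_x rho_C1(4))
  then show ?thesis by (simp add: e_eq)
qed

lemma DERIV_Dsol_x: "0 \<le> t \<Longrightarrow> t < T \<Longrightarrow>
   ((\<lambda>y. Dsol i j t y) has_real_derivative xi t x * Dsol (Suc i) j t x + ux t x * Dsol i (Suc j) t x) (at x)"
  unfolding Dsol_def by (intro smooth_partials_chain[OF partials] rho_C1(4) u_C1(4))

lemma continuous_Dsol: "continuous_on2 strip (Dsol i j)"
proof -
  have "continuous_on strip (\<lambda>p. (\<lambda>(r, v). D i j r v) (rho (fst p) (snd p), u (fst p) (snd p)))"
    by (rule continuous_on_compose2[OF smooth_partials_continuous[OF partials]
          continuous_on_Pair[OF rho_C1(1) u_C1(1)]]) auto
  then show ?thesis by (simp add: Dsol_def)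
qed

lemma continuous_e: "continuous_on2 strip e"
  unfolding e_eq by (intro continuous_intros u_C1(2) rho_C1(1))

text \<open>The system solved for the time derivatives, with (rho f)_x expanded by the chain rule.\<close>

definition "rho_t t x = - (xi t x * Dsol 0 0 t x + rho t x * (xi t x * Dsol 1 0 t x + ux t x * Dsol 0 1 t x))"
definition "u_t t x = - u t x * ux t x + rho t x * (Dsol 0 0 t x - u t x)"

lemma pt_rho_eq: "0 < t \<Longrightarrow> t < T \<Longrightarrow> pt rho t x = rho_t t x"
proof -
  assume t: "0 < t" "t < T"
  have "((\<lambda>y. rho t y * Dsol 0 0 t y) has_real_derivative
      xi t x * Dsol 0 0 t x + rho t x * (xi t x * Dsol 1 0 t x + ux t x * Dsol 0 1 t x)) (at x)"
    using DERIV_mult[OF rho_C1(4)[of t x] DERIV_Dsol_x[of t 0 0 x]] t by (simp add: mult.commute)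
  then have "px (\<lambda>s y. rho s y * D 0 0 (rho s y) (u s y)) t x =
      xi t x * Dsol 0 0 t x + rho t x * (xi t x * Dsol 1 0 t x + ux t x * Dsol 0 1 t x)"
    unfolding px_def Dsol_def by (rule DERIV_imp_deriv)
  moreover have "pt rho t x + px (\<lambda>s y. rho s y * D 0 0 (rho s y) (u s y)) t x = 0"
    using solution t unfolding classical_solution_def by auto
  ultimately show ?thesis unfolding rho_t_def by simp
qed

lemma pt_u_eq:
  assumes "0 < t" "t < T"
  shows "pt u t x = u_t t x"
proof -
  have "pt u t x + u t x * px u t x = rho t x * (D 0 0 (rho t x) (u t x) - u t x)"
    using solution assms unfolding classical_solution_def by auto
  then show ?thesis unfolding u_t_def Dsol_def ux_def by (simp add: algebra_simps)
qed

lemma DERIV_rho_t: "0 < t \<Longrightarrow> t < T \<Longrightarrow> ((\<lambda>s. rho s x) has_real_derivative rho_t t x) (at t)"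
  using rho_C1(5) pt_rho_eq by simp

definition "xi_t t x = - (Dsol 0 0 t x + rho t x * Dsol 1 0 t x) * xix t x
   - (2 * Dsol 1 0 t x + rho t x * Dsol 2 0 t x) * xi t x ^ 2
   - 2 * (Dsol 0 1 t x + rho t x * Dsol 1 1 t x) * ux t x * xi t x
   - rho t x * Dsol 0 2 t x * ux t x ^ 2 - rho t x * Dsol 0 1 t x * (eta t x - xi t x)"

lemma DERIV_rho_t_x:
  assumes "0 < t" "t < T"
  shows "((\<lambda>y. rho_t t y) has_real_derivative xi_t t x) (at x)"
proof -
  have t: "0 \<le> t" "t < T" using assms by auto
  show ?thesis
    unfolding rho_t_def
    by (rule DERIV_cong[OF DERIV_minus[OF DERIV_add[OF DERIV_mult[OF xi_C1(4)[OF t] DERIV_Dsol_x[OF t]]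
          DERIV_mult[OF rho_C1(4)[OF t] DERIV_add[OF DERIV_mult[OF xi_C1(4)[OF t] DERIV_Dsol_x[OF t]]
              DERIV_mult[OF DERIV_ux_x[OF t] DERIV_Dsol_x[OF t]]]]]]])
      (simp add: xi_t_def numeral_2_eq_2 power2_eq_square algebra_simps)
qed

lemma DERIV_xi_t:
  assumes "0 < t" "t < T"
  shows "((\<lambda>s. xi s x) has_real_derivative xi_t t x) (at t)"
proof -
  have "((\<lambda>y. pt rho t y) has_real_derivative pt xi t x) (at x)"
    by (rule mixed_partials_commute[of "min t (T - t)" t x rho "pt rho" xi "pt xi"])
      (use assms in \<open>auto intro: rho_C1(4,5) xi_C1(5) continuous_on2_open_strip_at[OF xi_C1(3)]\<close>)
  then have "pt xi t x = xi_t t x"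
    using DERIV_rho_t_x[OF assms] pt_rho_eq assms by (simp add: DERIV_unique)
  then show ?thesis using xi_C1(5)[OF assms, of x] by simp
qed

definition "ux_t t x = - ux t x * ux t x - u t x * (eta t x - xi t x)
   + (xi t x * (Dsol 0 0 t x - u t x) + rho t x * (xi t x * Dsol 1 0 t x + ux t x * Dsol 0 1 t x - ux t x))"

lemma DERIV_u_t_x:
  assumes "0 < t" "t < T"
  shows "((\<lambda>y. pt u t y) has_real_derivative ux_t t x) (at x)"
proof -
  have t: "0 \<le> t" "t < T" using assms by auto
  have "((\<lambda>y. u_t t y) has_real_derivative ux_t t x) (at x)"
    unfolding u_t_def
    by (rule DERIV_cong[OF DERIV_add[OF DERIV_mult[OF DERIV_minus[OF u_C1(4)[OF t]] DERIV_ux_x[OF t]]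
          DERIV_mult[OF rho_C1(4)[OF t] DERIV_diff[OF DERIV_Dsol_x[OF t] u_C1(4)[OF t]]]]])
      (simp add: ux_t_def algebra_simps)
  then show ?thesis using pt_u_eq assms by simp
qed

lemma DERIV_ux_t:
  assumes "0 < t" "t < T"
  shows "((\<lambda>s. ux s x) has_real_derivative ux_t t x) (at t)"
proof -
  have "continuous_on2 strip ux_t"
    unfolding ux_t_def by (intro continuous_intros continuous_Dsol u_C1(1,2) eta_C1(1) rho_C1(1,2))
  then have "continuous_on2 open_strip ux_t" by (rule continuous_on_subset) auto
  then show ?thesis
    by (intro mixed_partials_commute'[of "min t (T - t)" t x u "pt u" ux ux_t])
      (use assms in \<open>auto intro: u_C1(4,5) DERIV_u_t_x continuous_on2_open_strip_at\<close>)
qed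

definition "e_t t x = - u t x * eta t x - ux t x * e t x"

lemma DERIV_e_t:
  assumes "0 < t" "t < T"
  shows "((\<lambda>s. e s x) has_real_derivative e_t t x) (at t)"
proof -
  have "((\<lambda>s. ux s x + rho s x) has_real_derivative e_t t x) (at t)"
    by (rule DERIV_cong[OF DERIV_add[OF DERIV_ux_t[OF assms] DERIV_rho_t[OF assms]]])
      (simp add: rho_t_def ux_t_def e_t_def e_eq algebra_simps)
  then show ?thesis by (simp add: e_eq)
qed

definition "eta_t t x = - u t x * etax t x - 2 * ux t x * eta t x - (eta t x - xi t x) * e t x"

lemma DERIV_e_t_x:
  assumes "0 < t" "t < T"
  shows "((\<lambda>y. e_t t y) has_real_derivative eta_t t x) (at x)"
proof -
  have t: "0 \<le> t" "t < T" using assms by auto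
  show ?thesis
    unfolding e_t_def
    by (rule DERIV_cong[OF DERIV_diff[OF DERIV_mult[OF DERIV_minus[OF u_C1(4)[OF t]] eta_C1(4)[OF t]]
          DERIV_mult[OF DERIV_ux_x[OF t] DERIV_e_x[OF t]]]])
      (simp add: eta_t_def algebra_simps)
qed

lemma DERIV_eta_t:
  assumes "0 < t" "t < T"
  shows "((\<lambda>s. eta s x) has_real_derivative eta_t t x) (at t)"
proof -
  have "continuous_on2 strip eta_t"
    unfolding eta_t_def by (intro continuous_intros continuous_e u_C1(1,2) eta_C1(1,2) rho_C1(2))
  then have "continuous_on2 open_strip eta_t" by (rule continuous_on_subset) auto
  then show ?thesis
    by (intro mixed_partials_commute'[of "min t (T - t)" t x e e_t eta eta_t])
      (use assms in \<open>auto intro: DERIV_e_t DERIV_e_x DERIV_e_t_x continuous_on2_open_strip_at\<close>)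
qed


lemma solution_bounded:
  assumes "t < T"
  obtains B where "\<And>s x. s \<in> {0..t} \<Longrightarrow>
    \<bar>rho s x\<bar> \<le> B \<and> \<bar>u s x\<bar> \<le> B \<and> \<bar>xi s x\<bar> \<le> B \<and> \<bar>ux s x\<bar> \<le> B \<and> \<bar>eta s x\<bar> \<le> B"
proof -
  obtain B1 where "\<forall>s\<in>{0..t}. \<forall>x. \<bar>rho s x\<bar> \<le> B1 \<and> \<bar>u s x\<bar> \<le> B1 \<and>
      \<bar>px rho s x\<bar> \<le> B1 \<and> \<bar>px u s x\<bar> \<le> B1"
    using solution assms unfolding classical_solution_def by blast
  moreover obtain B2 where "\<forall>s\<in>{0..t}. \<forall>x. \<bar>px rho s x\<bar> \<le> B2 \<and> \<bar>px (efun rho u) s x\<bar> \<le> B2"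
    using regular assms unfolding extra_regular_def by blast
  ultimately show ?thesis
    by (intro that[of "max B1 B2"]) (auto simp: le_max_iff_disj xi_def ux_def eta_def e_def)
qed

lemma Dsol_bounded:
  assumes "t < T"
  obtains C where "\<And>i j s x. i \<le> 2 \<Longrightarrow> j \<le> 2 \<Longrightarrow> s \<in> {0..t} \<Longrightarrow> \<bar>Dsol i j s x\<bar> \<le> C"
proof -
  obtain B where B: "\<And>s x. s \<in> {0..t} \<Longrightarrow> \<bar>rho s x\<bar> \<le> B \<and> \<bar>u s x\<bar> \<le> B"
    using solution_bounded[OF assms] by metis
  have "\<exists>C. \<forall>r v. \<bar>r\<bar> \<le> B \<longrightarrow> \<bar>v\<bar> \<le> B \<longrightarrow> \<bar>D i j r v\<bar> \<le> C" for i j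
    by (rule continuous_bounded_on_square[OF smooth_partials_continuous[OF partials], where M=B]) blast
  then obtain C where C: "\<And>i j r v. \<bar>r\<bar> \<le> B \<Longrightarrow> \<bar>v\<bar> \<le> B \<Longrightarrow> \<bar>D i j r v\<bar> \<le> C i j"
    by metis
  show ?thesis
  proof (rule that[of "\<Sum>p\<in>{..2} \<times> {..2}. \<bar>C (fst p) (snd p)\<bar>"])
    fix i j s x assume "i \<le> (2::nat)" "j \<le> (2::nat)" "s \<in> {0..t}"
    then have "\<bar>Dsol i j s x\<bar> \<le> \<bar>C i j\<bar>"
      using B[of s x] C[of "rho s x" "u s x" i j] unfolding Dsol_def by linarith
    also have "\<dots> \<le> (\<Sum>p\<in>{..2} \<times> {..2}. \<bar>C (fst p) (snd p)\<bar>)"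
      using member_le_sum[of "(i, j)" "{..2} \<times> {..2}" "\<lambda>p. \<bar>C (fst p) (snd p)\<bar>"] \<open>i \<le> 2\<close> \<open>j \<le> 2\<close>
      by simp
    finally show "\<bar>Dsol i j s x\<bar> \<le> (\<Sum>p\<in>{..2} \<times> {..2}. \<bar>C (fst p) (snd p)\<bar>)" .
  qed
qed

lemma rho_init: "rho 0 x = rho0 x" and u_init: "u 0 x = u0 x"
  using solution unfolding classical_solution_def by auto

lemma xi_init: "xi 0 x = deriv rho0 x"
  unfolding xi_def px_def rho_init by simp

lemma eta_init: "eta 0 x = deriv (\<lambda>y. deriv u0 y + rho0 y) x"
  unfolding eta_def px_def e_eq ux_def rho_init u_init by simp

lemma restrict_to_closed_strip: "continuous_on2 strip X \<Longrightarrow> t1 < T \<Longrightarrow> continuous_on2 ({0..t1} \<times> UNIV) X"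
  by (erule continuous_on_subset) auto


lemma rho_touching_estimate:
  assumes "t1 < T"
  obtains L where "\<And>s x a. s \<in> {0..t1} \<Longrightarrow> 0 < a \<Longrightarrow> rho s x = - a \<Longrightarrow> \<bar>xi s x\<bar> \<le> a \<Longrightarrow>
    rho_t s x > - L * a"
proof -
  obtain B where B: "\<And>s x. s \<in> {0..t1} \<Longrightarrow>
      \<bar>rho s x\<bar> \<le> B \<and> \<bar>u s x\<bar> \<le> B \<and> \<bar>xi s x\<bar> \<le> B \<and> \<bar>ux s x\<bar> \<le> B \<and> \<bar>eta s x\<bar> \<le> B"
    using solution_bounded[OF assms] by metis
  obtain C where C: "\<And>i j s x. i \<le> 2 \<Longrightarrow> j \<le> 2 \<Longrightarrow> s \<in> {0..t1} \<Longrightarrow> \<bar>Dsol i j s x\<bar> \<le> C"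
    using Dsol_bounded[OF assms] by metis
  show ?thesis
  proof (rule that[of "C + 2 * B * C + 1"])
    fix s x a assume s: "s \<in> {0..t1}" and "0 < a" "rho s x = - a" "\<bar>xi s x\<bar> \<le> a"
    have Ds: "\<bar>Dsol i j s x\<bar> \<le> C" if "i \<le> 2" "j \<le> 2" for i j using C[OF that s] .
    have Bs: "\<bar>xi s x\<bar> \<le> B" "\<bar>ux s x\<bar> \<le> B" using B[OF s] by auto
    define c where "c = xi s x * Dsol 1 0 s x + ux s x * Dsol 0 1 s x"
    have "\<bar>c\<bar> \<le> B * C + B * C"
      unfolding c_def
      by (rule order_trans[OF abs_triangle_ineq add_mono]; rule abs_mult_bound) (use Bs Ds in auto)
    then have "\<bar>a * c\<bar> \<le> a * (B * C + B * C)"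
      using abs_mult_bound[of a a c] \<open>0 < a\<close> by simp
    then have "- (2 * B * C * a) \<le> a * c" by (simp add: algebra_simps)
    moreover have "\<bar>xi s x * Dsol 0 0 s x\<bar> \<le> a * C"
      by (rule abs_mult_bound) (use \<open>\<bar>xi s x\<bar> \<le> a\<close> Ds in auto)
    then have "- (C * a) \<le> - xi s x * Dsol 0 0 s x" by (simp add: algebra_simps)
    moreover have "rho_t s x = - xi s x * Dsol 0 0 s x + a * c"
      unfolding rho_t_def c_def \<open>rho s x = - a\<close> by (simp add: algebra_simps)
    ultimately show "rho_t s x > - (C + 2 * B * C + 1) * a"
      using \<open>0 < a\<close> by (simp add: algebra_simps)
  qed
qed

lemma rho_nonneg:
  assumes "\<forall>x. rho0 x \<ge> 0" "t \<in> {0..<T}"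
  shows "rho t x \<ge> 0"
proof -
  define t1 where "t1 = (t + T) / 2"
  have t1: "0 < t1" "t1 < T" "t \<in> {0..t1}" using assms(2) by (auto simp: t1_def)
  obtain B where B: "\<And>s x. s \<in> {0..t1} \<Longrightarrow>
      \<bar>rho s x\<bar> \<le> B \<and> \<bar>u s x\<bar> \<le> B \<and> \<bar>xi s x\<bar> \<le> B \<and> \<bar>ux s x\<bar> \<le> B \<and> \<bar>eta s x\<bar> \<le> B"
    using solution_bounded[OF t1(2)] by metis
  obtain L where L: "\<And>s x a. s \<in> {0..t1} \<Longrightarrow> 0 < a \<Longrightarrow> rho s x = - a \<Longrightarrow> \<bar>xi s x\<bar> \<le> a \<Longrightarrow>
      rho_t s x > - L * a"
    using rho_touching_estimate[OF t1(2)] by metis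
  show ?thesis
  proof (rule minimum_principle[of t1 rho B xi rho_t L])
    show "continuous_on2 ({0..t1} \<times> UNIV) rho"
      using rho_C1(1) t1(2) by (rule restrict_to_closed_strip)
    show "\<bar>rho s x\<bar> \<le> B" if "s \<in> {0..t1}" for s x using B[OF that] by simp
    show "rho 0 x \<ge> 0" for x using assms(1) by (simp add: rho_init)
    show "((\<lambda>y. rho s y) has_real_derivative xi s x) (at x)" if "0 < s" "s \<le> t1" for s x
      using that t1 by (intro rho_C1(4)) auto
    show "((\<lambda>s'. rho s' x) has_real_derivative rho_t s x) (at s)" if "0 < s" "s \<le> t1" for s x
      using that t1 by (intro DERIV_rho_t) auto
  qed (use t1 L in auto)
qed

lemma e_nonneg:
  assumes "\<forall>x. deriv u0 x + rho0 x \<ge> 0" "t \<in> {0..<T}"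
  shows "e t x \<ge> 0"
proof -
  define t1 where "t1 = (t + T) / 2"
  have t1: "0 < t1" "t1 < T" "t \<in> {0..t1}" using assms(2) by (auto simp: t1_def)
  obtain B where B: "\<And>s x. s \<in> {0..t1} \<Longrightarrow>
      \<bar>rho s x\<bar> \<le> B \<and> \<bar>u s x\<bar> \<le> B \<and> \<bar>xi s x\<bar> \<le> B \<and> \<bar>ux s x\<bar> \<le> B \<and> \<bar>eta s x\<bar> \<le> B"
    using solution_bounded[OF t1(2)] by metis
  show ?thesis
  proof (rule minimum_principle[of t1 e "2 * B" eta e_t "2 * B + 1"])
    show "continuous_on2 ({0..t1} \<times> UNIV) e"
      using continuous_e t1(2) by (rule restrict_to_closed_strip)
    show "\<bar>e s x\<bar> \<le> 2 * B" if "s \<in> {0..t1}" for s x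
      using B[OF that, of x] unfolding e_eq by linarith
    show "e 0 x \<ge> 0" for x
      using assms(1) by (simp add: e_eq rho_init ux_def px_def u_init)
    show "((\<lambda>y. e s y) has_real_derivative eta s x) (at x)" if "0 < s" "s \<le> t1" for s x
      using that t1 by (intro DERIV_e_x) auto
    show "((\<lambda>s'. e s' x) has_real_derivative e_t s x) (at s)" if "0 < s" "s \<le> t1" for s x
      using that t1 by (intro DERIV_e_t) auto
    show "e_t s x > - (2 * B + 1) * a"
      if s: "0 < s" "s \<le> t1" and "0 < a" "e s x = - a" "\<bar>eta s x\<bar> \<le> a" for s x a
    proof -
      have Bs: "\<bar>u s x\<bar> \<le> B" "\<bar>ux s x\<bar> \<le> B" using B[of s x] s by auto
      have "\<bar>u s x * eta s x\<bar> \<le> B * a" "\<bar>ux s x * a\<bar> \<le> B * a"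
        using abs_mult_bound[OF Bs(1) \<open>\<bar>eta s x\<bar> \<le> a\<close>] abs_mult_bound[OF Bs(2), of a a] \<open>0 < a\<close>
        by auto
      moreover have "e_t s x = - (u s x * eta s x) + ux s x * a"
        unfolding e_t_def \<open>e s x = - a\<close> by simp
      ultimately show ?thesis using \<open>0 < a\<close> by (simp add: algebra_simps abs_le_iff)
    qed
  qed (use t1 in auto)
qed


lemma xi_touching_estimate:
  assumes "t1 < T" and sign: "\<sigma> = 1 \<or> \<sigma> = -1"
    and rho_nonneg: "\<And>s x. s \<in> {0..t1} \<Longrightarrow> rho s x \<ge> 0"
    and f_u: "\<forall>r\<ge>0. \<forall>v. D 0 1 r v \<le> 0" and f_uu: "\<forall>r\<ge>0. \<forall>v. \<sigma> * D 0 2 r v \<le> 0"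
  obtains L where "\<And>s x a. s \<in> {0..t1} \<Longrightarrow> 0 < a \<Longrightarrow> \<sigma> * xi s x = - a \<Longrightarrow> \<sigma> * eta s x \<ge> - a \<Longrightarrow>
    \<bar>\<sigma> * xix s x\<bar> \<le> a \<Longrightarrow> \<sigma> * xi_t s x > - L * a"
proof -
  obtain B where B: "\<And>s x. s \<in> {0..t1} \<Longrightarrow>
      \<bar>rho s x\<bar> \<le> B \<and> \<bar>u s x\<bar> \<le> B \<and> \<bar>xi s x\<bar> \<le> B \<and> \<bar>ux s x\<bar> \<le> B \<and> \<bar>eta s x\<bar> \<le> B"
    using solution_bounded[OF assms(1)] by metis
  obtain C where C: "\<And>i j s x. i \<le> 2 \<Longrightarrow> j \<le> 2 \<Longrightarrow> s \<in> {0..t1} \<Longrightarrow> \<bar>Dsol i j s x\<bar> \<le> C"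
    using Dsol_bounded[OF assms(1)] by metis
  define G where "G = (C + B * C) + (2 * C + B * C) * B + 2 * (C + B * C) * B"
  txt \<open>At a touching point the two terms containing f_u combine to -rho f_u (sigma eta + a) >= 0
    and -sigma rho f_uu u_x^2 >= 0; the remaining terms are bounded by G a.\<close>
  show ?thesis
  proof (rule that[of "G + 1"])
    fix s x a assume s: "s \<in> {0..t1}" and "0 < a" and xi_a: "\<sigma> * xi s x = - a"
      and eta_a: "\<sigma> * eta s x \<ge> - a" and xix_a: "\<bar>\<sigma> * xix s x\<bar> \<le> a"
    have Ds: "\<bar>Dsol i j s x\<bar> \<le> C" if "i \<le> 2" "j \<le> 2" for i j using C[OF that s] .
    have Bs: "\<bar>rho s x\<bar> \<le> B" "\<bar>xi s x\<bar> \<le> B" "\<bar>ux s x\<bar> \<le> B" using B[OF s] by auto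
    have rho_D: "\<bar>rho s x * Dsol i j s x\<bar> \<le> B * C" if "i \<le> 2" "j \<le> 2" for i j
      using abs_mult_bound[OF Bs(1) Ds[OF that]] .
    let ?gR = "Dsol 0 0 s x + rho s x * Dsol 1 0 s x"
    let ?gRR = "(2 * Dsol 1 0 s x + rho s x * Dsol 2 0 s x) * xi s x"
    let ?gRU = "2 * (Dsol 0 1 s x + rho s x * Dsol 1 1 s x) * ux s x"
    let ?rD = "rho s x * Dsol 0 1 s x"
    let ?N = "\<sigma> * (rho s x * Dsol 0 2 s x * ux s x ^ 2)"
    have "\<sigma> * xi_t s x = - ?gR * (\<sigma> * xix s x) - ?gRR * (\<sigma> * xi s x) - ?gRU * (\<sigma> * xi s x)
        - ?N - ?rD * (\<sigma> * eta s x) + ?rD * (\<sigma> * xi s x)"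
      unfolding xi_t_def by (simp add: algebra_simps power2_eq_square)
    also have "\<dots> = - ?gR * (\<sigma> * xix s x) + ?gRR * a + ?gRU * a - ?N - ?rD * (\<sigma> * eta s x) - ?rD * a"
      unfolding xi_a by simp
    finally have xi_t_eq: "\<sigma> * xi_t s x =
        - ?gR * (\<sigma> * xix s x) + ?gRR * a + ?gRU * a - ?N - ?rD * (\<sigma> * eta s x) - ?rD * a" .
    have "\<bar>?gR\<bar> \<le> C + B * C"
      using Ds[of 0 0] rho_D[of 1 0] by (simp add: abs_triangle_ineq order_trans[OF abs_triangle_ineq])
    then have "\<bar>?gR * (\<sigma> * xix s x)\<bar> \<le> (C + B * C) * a" using xix_a by (rule abs_mult_bound)
    moreover have "\<bar>?gRR\<bar> \<le> (2 * C + B * C) * B"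
    proof (rule abs_mult_bound[OF _ Bs(2)])
      show "\<bar>2 * Dsol 1 0 s x + rho s x * Dsol 2 0 s x\<bar> \<le> 2 * C + B * C"
        using Ds[of 1 0] rho_D[of 2 0] by (simp add: order_trans[OF abs_triangle_ineq])
    qed
    then have "\<bar>?gRR * a\<bar> \<le> (2 * C + B * C) * B * a" using \<open>0 < a\<close> by (simp add: abs_mult)
    moreover have "\<bar>?gRU\<bar> \<le> 2 * (C + B * C) * B"
    proof -
      have "\<bar>Dsol 0 1 s x + rho s x * Dsol 1 1 s x\<bar> \<le> C + B * C"
        using Ds[of 0 1] rho_D[of 1 1] by (simp add: order_trans[OF abs_triangle_ineq])
      from abs_mult_bound[OF this Bs(3)]
      have "\<bar>(Dsol 0 1 s x + rho s x * Dsol 1 1 s x) * ux s x\<bar> \<le> (C + B * C) * B" .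
      moreover have "\<bar>?gRU\<bar> = 2 * \<bar>(Dsol 0 1 s x + rho s x * Dsol 1 1 s x) * ux s x\<bar>"
        by (simp only: abs_mult abs_numeral mult.assoc)
      ultimately show ?thesis by linarith
    qed
    then have "\<bar>?gRU * a\<bar> \<le> 2 * (C + B * C) * B * a" using \<open>0 < a\<close> by (simp add: abs_mult)
    moreover have "?N \<le> 0"
    proof -
      have "\<sigma> * Dsol 0 2 s x \<le> 0" using f_uu rho_nonneg[OF s] unfolding Dsol_def by blast
      with rho_nonneg[OF s] have "rho s x * ux s x ^ 2 * (\<sigma> * Dsol 0 2 s x) \<le> 0"
        by (simp add: mult_nonneg_nonpos)
      then show ?thesis by (simp add: mult_ac)
    qed
    moreover have "?rD * (\<sigma> * eta s x) \<le> - ?rD * a"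
    proof -
      have "?rD \<le> 0" using f_u rho_nonneg[OF s] unfolding Dsol_def by (simp add: mult_nonneg_nonpos)
      from mult_left_mono_neg[OF eta_a this] show ?thesis by simp
    qed
    ultimately show "\<sigma> * xi_t s x > - (G + 1) * a"
      unfolding xi_t_eq G_def using \<open>0 < a\<close> by (simp add: algebra_simps abs_le_iff)
  qed
qed

lemma eta_touching_estimate:
  assumes "t1 < T" and e_nonneg: "\<And>s x. s \<in> {0..t1} \<Longrightarrow> e s x \<ge> 0"
  obtains L where "\<And>s x a. s \<in> {0..t1} \<Longrightarrow> 0 < a \<Longrightarrow> \<sigma> * eta s x = - a \<Longrightarrow> \<sigma> * xi s x \<ge> - a \<Longrightarrow>
    \<bar>\<sigma> * etax s x\<bar> \<le> a \<Longrightarrow> \<sigma> * eta_t s x > - L * a"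
proof -
  obtain B where B: "\<And>s x. s \<in> {0..t1} \<Longrightarrow>
      \<bar>rho s x\<bar> \<le> B \<and> \<bar>u s x\<bar> \<le> B \<and> \<bar>xi s x\<bar> \<le> B \<and> \<bar>ux s x\<bar> \<le> B \<and> \<bar>eta s x\<bar> \<le> B"
    using solution_bounded[OF assms(1)] by metis
  show ?thesis
  proof (rule that[of "3 * B + 1"])
    fix s x a assume s: "s \<in> {0..t1}" and "0 < a" and eta_a: "\<sigma> * eta s x = - a"
      and xi_a: "\<sigma> * xi s x \<ge> - a" and etax_a: "\<bar>\<sigma> * etax s x\<bar> \<le> a"
    have Bs: "\<bar>u s x\<bar> \<le> B" "\<bar>ux s x\<bar> \<le> B" using B[OF s] by auto
    have "\<sigma> * eta_t s x = - u s x * (\<sigma> * etax s x) - 2 * ux s x * (\<sigma> * eta s x)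
        - (\<sigma> * eta s x) * e s x + (\<sigma> * xi s x) * e s x"
      unfolding eta_t_def by (simp add: algebra_simps)
    also have "\<dots> = - u s x * (\<sigma> * etax s x) + 2 * (ux s x * a) + (a + \<sigma> * xi s x) * e s x"
      unfolding eta_a by (simp add: algebra_simps)
    finally have eta_t_eq: "\<sigma> * eta_t s x =
        - u s x * (\<sigma> * etax s x) + 2 * (ux s x * a) + (a + \<sigma> * xi s x) * e s x" .
    have "\<bar>u s x * (\<sigma> * etax s x)\<bar> \<le> B * a" using Bs(1) etax_a by (rule abs_mult_bound)
    moreover have "\<bar>ux s x * a\<bar> \<le> B * a" using Bs(2) \<open>0 < a\<close> by (intro abs_mult_bound) auto
    moreover have "(a + \<sigma> * xi s x) * e s x \<ge> 0" using xi_a e_nonneg[OF s] by simp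
    ultimately show "\<sigma> * eta_t s x > - (3 * B + 1) * a"
      unfolding eta_t_eq using \<open>0 < a\<close> by (simp add: algebra_simps abs_le_iff)
  qed
qed

lemma xi_eta_signed_nonneg:
  assumes sign: "\<sigma> = 1 \<or> \<sigma> = -1"
    and rho0: "\<forall>x. rho0 x \<ge> 0" and e0: "\<forall>x. deriv u0 x + rho0 x \<ge> 0"
    and xi0: "\<forall>x. \<sigma> * xi 0 x \<ge> 0" and eta0: "\<forall>x. \<sigma> * eta 0 x \<ge> 0"
    and f_u: "\<forall>r\<ge>0. \<forall>v. D 0 1 r v \<le> 0" and f_uu: "\<forall>r\<ge>0. \<forall>v. \<sigma> * D 0 2 r v \<le> 0"
    and "t \<in> {0..<T}"
  shows "\<sigma> * xi t x \<ge> 0 \<and> \<sigma> * eta t x \<ge> 0"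
proof -
  define t1 where "t1 = (t + T) / 2"
  have t1: "0 < t1" "t1 < T" "t \<in> {0..t1}" using \<open>t \<in> {0..<T}\<close> by (auto simp: t1_def)
  have "rho s y \<ge> 0" "e s y \<ge> 0" if "s \<in> {0..t1}" for s y
    using rho_nonneg[OF rho0] e_nonneg[OF e0] that t1 by auto
  then obtain L1 L2 where
    L1: "\<And>s x a. s \<in> {0..t1} \<Longrightarrow> 0 < a \<Longrightarrow> \<sigma> * xi s x = - a \<Longrightarrow> \<sigma> * eta s x \<ge> - a \<Longrightarrow>
      \<bar>\<sigma> * xix s x\<bar> \<le> a \<Longrightarrow> \<sigma> * xi_t s x > - L1 * a" and
    L2: "\<And>s x a. s \<in> {0..t1} \<Longrightarrow> 0 < a \<Longrightarrow> \<sigma> * eta s x = - a \<Longrightarrow> \<sigma> * xi s x \<ge> - a \<Longrightarrow>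
      \<bar>\<sigma> * etax s x\<bar> \<le> a \<Longrightarrow> \<sigma> * eta_t s x > - L2 * a"
    using xi_touching_estimate[OF t1(2) sign _ f_u f_uu] eta_touching_estimate[OF t1(2)] by metis
  obtain B where B: "\<And>s x. s \<in> {0..t1} \<Longrightarrow>
      \<bar>rho s x\<bar> \<le> B \<and> \<bar>u s x\<bar> \<le> B \<and> \<bar>xi s x\<bar> \<le> B \<and> \<bar>ux s x\<bar> \<le> B \<and> \<bar>eta s x\<bar> \<le> B"
    using solution_bounded[OF t1(2)] by metis
  define L where "L = max L1 L2"
  have L_ge: "- L * a \<le> - L1 * a" "- L * a \<le> - L2 * a" if "0 < a" for a
    using that by (simp_all add: L_def mult_right_mono)
  show ?thesis
  proof (rule minimum_principle_pair[of t1 "\<lambda>s y. \<sigma> * xi s y" "\<lambda>s y. \<sigma> * eta s y" B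
        "\<lambda>s y. \<sigma> * xix s y" "\<lambda>s y. \<sigma> * xi_t s y" "\<lambda>s y. \<sigma> * etax s y" "\<lambda>s y. \<sigma> * eta_t s y" L])
    show "continuous_on2 ({0..t1} \<times> UNIV) (\<lambda>s y. \<sigma> * xi s y)"
      using restrict_to_closed_strip[OF xi_C1(1) t1(2)] by (intro continuous_intros)
    show "continuous_on2 ({0..t1} \<times> UNIV) (\<lambda>s y. \<sigma> * eta s y)"
      using restrict_to_closed_strip[OF eta_C1(1) t1(2)] by (intro continuous_intros)
    show "\<bar>\<sigma> * xi s y\<bar> \<le> B \<and> \<bar>\<sigma> * eta s y\<bar> \<le> B" if "s \<in> {0..t1}" for s y
      using B[OF that, of y] sign by (auto simp: abs_mult)
    show "((\<lambda>y. \<sigma> * xi s y) has_real_derivative \<sigma> * xix s y) (at y)"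
      "((\<lambda>y. \<sigma> * eta s y) has_real_derivative \<sigma> * etax s y) (at y)"
      "((\<lambda>s'. \<sigma> * xi s' y) has_real_derivative \<sigma> * xi_t s y) (at s)"
      "((\<lambda>s'. \<sigma> * eta s' y) has_real_derivative \<sigma> * eta_t s y) (at s)"
      if "0 < s" "s \<le> t1" for s y
      using that t1 by (auto intro!: DERIV_cmult xi_C1(4) eta_C1(4) DERIV_xi_t DERIV_eta_t)
    show "\<sigma> * xi_t s y > - L * a"
      if "0 < s" "s \<le> t1" "0 < a" "\<sigma> * xi s y = - a" "\<sigma> * eta s y \<ge> - a" "\<bar>\<sigma> * xix s y\<bar> \<le> a"
      for s y a
    proof -
      have "\<sigma> * xi_t s y > - L1 * a" by (rule L1) (use that in auto)
      with L_ge(1)[OF \<open>0 < a\<close>] show ?thesis by linarith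
    qed
    show "\<sigma> * eta_t s y > - L * a"
      if "0 < s" "s \<le> t1" "0 < a" "\<sigma> * eta s y = - a" "\<sigma> * xi s y \<ge> - a" "\<bar>\<sigma> * etax s y\<bar> \<le> a"
      for s y a
    proof -
      have "\<sigma> * eta_t s y > - L2 * a" by (rule L2) (use that in auto)
      with L_ge(2)[OF \<open>0 < a\<close>] show ?thesis by linarith
    qed
  qed (use xi0 eta0 t1 in auto)
qed


end

section \<open>The upper bound on xi\<close>

text \<open>The bound depends on the solution only through M, which is what makes the bound on xi
  independent of any a priori bound on xi.\<close>

definition coeff_bound :: "(nat \<Rightarrow> nat \<Rightarrow> real \<Rightarrow> real \<Rightarrow> real) \<Rightarrow> real \<Rightarrow> real" where
  "coeff_bound D M = (SOME K. K \<ge> 0 \<and> (\<forall>r v. \<bar>r\<bar> \<le> M \<longrightarrow> \<bar>v\<bar> \<le> M \<longrightarrow>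
      2 * \<bar>D 0 1 r v + r * D 1 1 r v\<bar> * M + \<bar>r * D 0 1 r v\<bar> \<le> K \<and>
      \<bar>r * D 0 2 r v\<bar> * M\<^sup>2 + \<bar>r * D 0 1 r v\<bar> * M \<le> K))"

lemma coeff_bound:
  assumes "smooth_partials D"
  shows "coeff_bound D M \<ge> 0"
    and "\<bar>r\<bar> \<le> M \<Longrightarrow> \<bar>v\<bar> \<le> M \<Longrightarrow> 2 * \<bar>D 0 1 r v + r * D 1 1 r v\<bar> * M + \<bar>r * D 0 1 r v\<bar> \<le> coeff_bound D M"
    and "\<bar>r\<bar> \<le> M \<Longrightarrow> \<bar>v\<bar> \<le> M \<Longrightarrow> \<bar>r * D 0 2 r v\<bar> * M\<^sup>2 + \<bar>r * D 0 1 r v\<bar> * M \<le> coeff_bound D M"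
proof -
  have cD: "continuous_on UNIV (\<lambda>p. D i j (fst p) (snd p))" for i j
    using smooth_partials_continuous[OF assms, of i j] by (simp add: case_prod_beta')
  have c1: "continuous_on UNIV (\<lambda>(r, v). 2 * \<bar>D 0 1 r v + r * D 1 1 r v\<bar> * M + \<bar>r * D 0 1 r v\<bar>)"
    and c2: "continuous_on UNIV (\<lambda>(r, v). \<bar>r * D 0 2 r v\<bar> * M\<^sup>2 + \<bar>r * D 0 1 r v\<bar> * M)"
    using cD by (auto simp: case_prod_beta' intro!: continuous_intros)
  obtain K1 where K1: "\<And>r v. \<bar>r\<bar> \<le> M \<Longrightarrow> \<bar>v\<bar> \<le> M \<Longrightarrow>
      \<bar>2 * \<bar>D 0 1 r v + r * D 1 1 r v\<bar> * M + \<bar>r * D 0 1 r v\<bar>\<bar> \<le> K1"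
    using continuous_bounded_on_square[OF c1] by metis
  obtain K2 where K2: "\<And>r v. \<bar>r\<bar> \<le> M \<Longrightarrow> \<bar>v\<bar> \<le> M \<Longrightarrow>
      \<bar>\<bar>r * D 0 2 r v\<bar> * M\<^sup>2 + \<bar>r * D 0 1 r v\<bar> * M\<bar> \<le> K2"
    using continuous_bounded_on_square[OF c2] by metis
  have "\<exists>K. K \<ge> 0 \<and> (\<forall>r v. \<bar>r\<bar> \<le> M \<longrightarrow> \<bar>v\<bar> \<le> M \<longrightarrow>
      2 * \<bar>D 0 1 r v + r * D 1 1 r v\<bar> * M + \<bar>r * D 0 1 r v\<bar> \<le> K \<and>
      \<bar>r * D 0 2 r v\<bar> * M\<^sup>2 + \<bar>r * D 0 1 r v\<bar> * M \<le> K)"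
  proof (intro exI[of _ "max 0 (max K1 K2)"] conjI allI impI)
    fix r v :: real assume "\<bar>r\<bar> \<le> M" "\<bar>v\<bar> \<le> M"
    from K1[OF this] K2[OF this]
    show "2 * \<bar>D 0 1 r v + r * D 1 1 r v\<bar> * M + \<bar>r * D 0 1 r v\<bar> \<le> max 0 (max K1 K2)"
      "\<bar>r * D 0 2 r v\<bar> * M\<^sup>2 + \<bar>r * D 0 1 r v\<bar> * M \<le> max 0 (max K1 K2)"
      by linarith+
  qed simp
  then have "coeff_bound D M \<ge> 0 \<and> (\<forall>r v. \<bar>r\<bar> \<le> M \<longrightarrow> \<bar>v\<bar> \<le> M \<longrightarrow>
      2 * \<bar>D 0 1 r v + r * D 1 1 r v\<bar> * M + \<bar>r * D 0 1 r v\<bar> \<le> coeff_bound D M \<and>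
      \<bar>r * D 0 2 r v\<bar> * M\<^sup>2 + \<bar>r * D 0 1 r v\<bar> * M \<le> coeff_bound D M)"
    unfolding coeff_bound_def by (rule someI_ex)
  then show "coeff_bound D M \<ge> 0"
    and "\<bar>r\<bar> \<le> M \<Longrightarrow> \<bar>v\<bar> \<le> M \<Longrightarrow> 2 * \<bar>D 0 1 r v + r * D 1 1 r v\<bar> * M + \<bar>r * D 0 1 r v\<bar> \<le> coeff_bound D M"
    and "\<bar>r\<bar> \<le> M \<Longrightarrow> \<bar>v\<bar> \<le> M \<Longrightarrow> \<bar>r * D 0 2 r v\<bar> * M\<^sup>2 + \<bar>r * D 0 1 r v\<bar> * M \<le> coeff_bound D M"
    by blast+
qed

definition envelope :: "real \<Rightarrow> real \<Rightarrow> real \<Rightarrow> real" where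
  "envelope B0 K s = (B0 + 1) * exp ((2 * K + 1) * s) - 1"

lemma envelope_DERIV:
  "((\<lambda>s. envelope B0 K s) has_real_derivative (2 * K + 1) * (envelope B0 K s + 1)) (at s)"
  unfolding envelope_def by (auto intro!: derivative_eq_intros)

lemma envelope_mono: "K \<ge> 0 \<Longrightarrow> B0 \<ge> 0 \<Longrightarrow> s \<le> t \<Longrightarrow> envelope B0 K s \<le> envelope B0 K t"
  unfolding envelope_def by (auto intro!: mult_left_mono mult_right_mono)

lemma envelope_ge: "K \<ge> 0 \<Longrightarrow> B0 \<ge> 0 \<Longrightarrow> 0 \<le> s \<Longrightarrow> B0 \<le> envelope B0 K s"
  using envelope_mono[of K B0 0 s] by (simp add: envelope_def)

context smooth_solution
begin

lemma xi_envelope_touching_estimate: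
  assumes "t < T" and sign: "\<sigma> = 1 \<or> \<sigma> = -1" and "B0 \<ge> 0"
    and rho_nonneg: "\<And>s x. s \<in> {0..t} \<Longrightarrow> rho s x \<ge> 0"
    and xi_signed: "\<And>s x. s \<in> {0..t} \<Longrightarrow> \<sigma> * xi s x \<ge> 0"
    and f_RR: "\<forall>r\<ge>0. \<forall>v. \<sigma> * (2 * D 1 0 r v + r * D 2 0 r v) \<ge> 0"
    and M: "\<And>s x. s \<in> {0..t} \<Longrightarrow> \<bar>rho s x\<bar> \<le> M \<and> \<bar>u s x\<bar> \<le> M \<and> \<bar>ux s x\<bar> \<le> M \<and> \<bar>eta s x\<bar> \<le> M"
  obtains L where "\<And>s x a. s \<in> {0..t} \<Longrightarrow> 0 < a \<Longrightarrow>
    envelope B0 (coeff_bound D M) s - \<sigma> * xi s x = - a \<Longrightarrow> \<bar>\<sigma> * xix s x\<bar> \<le> a \<Longrightarrow>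
    (2 * coeff_bound D M + 1) * (envelope B0 (coeff_bound D M) s + 1) - \<sigma> * xi_t s x > - L * a"
proof -
  txt \<open>The quadratic term sigma (rho f)_rhorho xi^2 >= 0 drops out, and the coefficient of
    sigma xi >= 0 as well as the remaining source are bounded by K.\<close>
  define K where "K = coeff_bound D M"
  obtain B where B: "\<And>s x. s \<in> {0..t} \<Longrightarrow>
      \<bar>rho s x\<bar> \<le> B \<and> \<bar>u s x\<bar> \<le> B \<and> \<bar>xi s x\<bar> \<le> B \<and> \<bar>ux s x\<bar> \<le> B \<and> \<bar>eta s x\<bar> \<le> B"
    using solution_bounded[OF assms(1)] by metis
  obtain C where C: "\<And>i j s x. i \<le> 2 \<Longrightarrow> j \<le> 2 \<Longrightarrow> s \<in> {0..t} \<Longrightarrow> \<bar>Dsol i j s x\<bar> \<le> C"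
    using Dsol_bounded[OF assms(1)] by metis
  show ?thesis
  proof (rule that[of "C + B * C + K"], fold K_def)
    fix s x a assume s: "s \<in> {0..t}" and "0 < a"
      and xi_a: "envelope B0 K s - \<sigma> * xi s x = - a" and xix_a: "\<bar>\<sigma> * xix s x\<bar> \<le> a"
    have Ms: "\<bar>rho s x\<bar> \<le> M" "\<bar>u s x\<bar> \<le> M" "\<bar>ux s x\<bar> \<le> M" "\<bar>eta s x\<bar> \<le> M" using M[OF s] by auto
    have K: "K \<ge> 0" "2 * \<bar>Dsol 0 1 s x + rho s x * Dsol 1 1 s x\<bar> * M + \<bar>rho s x * Dsol 0 1 s x\<bar> \<le> K"
      "\<bar>rho s x * Dsol 0 2 s x\<bar> * M\<^sup>2 + \<bar>rho s x * Dsol 0 1 s x\<bar> * M \<le> K"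
      using coeff_bound(1)[OF partials, of M] coeff_bound(2,3)[OF partials, where M=M and r="rho s x" and v="u s x"] Ms(1,2)
      unfolding K_def Dsol_def by auto
    let ?z = "\<sigma> * xi s x"
    let ?gR = "Dsol 0 0 s x + rho s x * Dsol 1 0 s x"
    let ?gRR = "\<sigma> * (2 * Dsol 1 0 s x + rho s x * Dsol 2 0 s x)"
    let ?c = "- (2 * (Dsol 0 1 s x + rho s x * Dsol 1 1 s x) * ux s x) + rho s x * Dsol 0 1 s x"
    let ?N = "- (\<sigma> * (rho s x * Dsol 0 2 s x * ux s x ^ 2)) - rho s x * Dsol 0 1 s x * (\<sigma> * eta s x)"
    have xi_t_eq: "\<sigma> * xi_t s x = - ?gR * (\<sigma> * xix s x) - ?gRR * (xi s x * xi s x) + ?c * ?z + ?N"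
      unfolding xi_t_def by (simp add: algebra_simps power2_eq_square)
    have "\<bar>Dsol 0 0 s x\<bar> \<le> C" "\<bar>Dsol 1 0 s x\<bar> \<le> C" "\<bar>rho s x\<bar> \<le> B"
      using C[OF _ _ s] B[OF s] by auto
    then have "\<bar>?gR\<bar> \<le> C + B * C"
      using abs_mult_bound[of "rho s x" B "Dsol 1 0 s x" C] abs_triangle_ineq[of "Dsol 0 0 s x"] by linarith
    from abs_mult_bound[OF this xix_a] have "- ?gR * (\<sigma> * xix s x) \<le> (C + B * C) * a"
      unfolding abs_le_iff by (simp only: mult_minus_left)
    moreover have "?gRR * (xi s x * xi s x) \<ge> 0"
      using f_RR rho_nonneg[OF s] unfolding Dsol_def by simp
    moreover have "?c * ?z \<le> K * ?z"
    proof (rule mult_right_mono[OF _ xi_signed[OF s]])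
      have "\<bar>2 * (Dsol 0 1 s x + rho s x * Dsol 1 1 s x) * ux s x\<bar>
          = 2 * \<bar>Dsol 0 1 s x + rho s x * Dsol 1 1 s x\<bar> * \<bar>ux s x\<bar>"
        by (simp only: abs_mult abs_numeral)
      also have "\<dots> \<le> 2 * \<bar>Dsol 0 1 s x + rho s x * Dsol 1 1 s x\<bar> * M"
        by (rule mult_left_mono[OF Ms(3)]) simp
      finally have "\<bar>2 * (Dsol 0 1 s x + rho s x * Dsol 1 1 s x) * ux s x\<bar>
          \<le> 2 * \<bar>Dsol 0 1 s x + rho s x * Dsol 1 1 s x\<bar> * M" .
      then show "?c \<le> K"
        using K(2) abs_ge_self[of "rho s x * Dsol 0 1 s x"]
          abs_ge_minus_self[of "2 * (Dsol 0 1 s x + rho s x * Dsol 1 1 s x) * ux s x"]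
        by linarith
    qed
    moreover have "?N \<le> K"
    proof -
      have "\<bar>\<sigma> * (rho s x * Dsol 0 2 s x * ux s x ^ 2)\<bar> \<le> \<bar>rho s x * Dsol 0 2 s x\<bar> * M\<^sup>2"
        using sign power_mono[OF Ms(3) abs_ge_zero, of 2] by (auto simp: abs_mult power_abs mult_left_mono)
      moreover have "\<bar>rho s x * Dsol 0 1 s x * (\<sigma> * eta s x)\<bar> \<le> \<bar>rho s x * Dsol 0 1 s x\<bar> * M"
        using sign Ms(4) by (auto simp: abs_mult mult_left_mono)
      ultimately show ?thesis using K(3) by (simp add: abs_le_iff)
    qed
    moreover have "envelope B0 K s + 1 > 0" using \<open>B0 \<ge> 0\<close> by (simp add: envelope_def)
    moreover have "K * ?z = K * envelope B0 K s + K * a"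
      using xi_a by (simp add: algebra_simps flip: distrib_left)
    moreover have "(2 * K + 1) * (envelope B0 K s + 1) = K * (envelope B0 K s + 1) + K * envelope B0 K s + K
        + (envelope B0 K s + 1)"
      by (simp add: algebra_simps)
    moreover have "K * (envelope B0 K s + 1) \<ge> 0" using K(1) \<open>envelope B0 K s + 1 > 0\<close> by simp
    moreover have "- (C + B * C + K) * a = - ((C + B * C) * a) - K * a" by (simp add: algebra_simps)
    ultimately show "(2 * K + 1) * (envelope B0 K s + 1) - \<sigma> * xi_t s x > - (C + B * C + K) * a"
      unfolding xi_t_eq by linarith
  qed
qed

lemma xi_signed_upper_bound:
  assumes sign: "\<sigma> = 1 \<or> \<sigma> = -1"
    and rho0: "\<forall>x. rho0 x \<ge> 0" and e0: "\<forall>x. deriv u0 x + rho0 x \<ge> 0"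
    and xi0: "\<forall>x. \<sigma> * xi 0 x \<ge> 0" and eta0: "\<forall>x. \<sigma> * eta 0 x \<ge> 0"
    and B0: "\<forall>x. \<bar>deriv rho0 x\<bar> \<le> B0"
    and f_u: "\<forall>r\<ge>0. \<forall>v. D 0 1 r v \<le> 0" and f_uu: "\<forall>r\<ge>0. \<forall>v. \<sigma> * D 0 2 r v \<le> 0"
    and f_RR: "\<forall>r\<ge>0. \<forall>v. \<sigma> * (2 * D 1 0 r v + r * D 2 0 r v) \<ge> 0"
    and t: "t \<in> {0..<T}"
    and M: "\<forall>s\<in>{0..t}. \<forall>x. \<bar>rho s x\<bar> \<le> M \<and> \<bar>u s x\<bar> \<le> M \<and> \<bar>ux s x\<bar> \<le> M \<and> \<bar>eta s x\<bar> \<le> M"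
    and s: "s \<in> {0..t}"
  shows "\<sigma> * xi s x \<le> envelope B0 (coeff_bound D M) t"
proof -
  define K where "K = coeff_bound D M"
  have "K \<ge> 0" unfolding K_def by (rule coeff_bound(1)[OF partials])
  have "B0 \<ge> 0" using B0 abs_ge_zero order_trans by blast
  have init: "\<sigma> * xi 0 y \<le> B0" for y
    using B0[rule_format, of y] sign by (auto simp: xi_init abs_le_iff)
  have "\<sigma> * xi s x \<le> envelope B0 K s"
  proof (cases "t = 0")
    case True
    then show ?thesis using s init by (simp add: envelope_def)
  next
    case False
    then have "0 < t" "t < T" using t by auto
    obtain L where L: "\<And>s x a. s \<in> {0..t} \<Longrightarrow> 0 < a \<Longrightarrow>
        envelope B0 K s - \<sigma> * xi s x = - a \<Longrightarrow> \<bar>\<sigma> * xix s x\<bar> \<le> a \<Longrightarrow>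
        (2 * K + 1) * (envelope B0 K s + 1) - \<sigma> * xi_t s x > - L * a"
    proof -
      have "rho s x \<ge> 0" "\<sigma> * xi s x \<ge> 0" if "s \<in> {0..t}" for s x
        using rho_nonneg[OF rho0] xi_eta_signed_nonneg[OF sign rho0 e0 xi0 eta0 f_u f_uu] that t
        by auto
      moreover have "\<bar>rho s x\<bar> \<le> M \<and> \<bar>u s x\<bar> \<le> M \<and> \<bar>ux s x\<bar> \<le> M \<and> \<bar>eta s x\<bar> \<le> M"
        if "s \<in> {0..t}" for s x
        using M that by blast
      ultimately show ?thesis
        using xi_envelope_touching_estimate[OF \<open>t < T\<close> sign \<open>B0 \<ge> 0\<close>, of M, folded K_def] f_RR that
        by blast
    qed
    obtain B where B: "\<And>s x. s \<in> {0..t} \<Longrightarrow>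
        \<bar>rho s x\<bar> \<le> B \<and> \<bar>u s x\<bar> \<le> B \<and> \<bar>xi s x\<bar> \<le> B \<and> \<bar>ux s x\<bar> \<le> B \<and> \<bar>eta s x\<bar> \<le> B"
      using solution_bounded[OF \<open>t < T\<close>] by metis
    have "envelope B0 K s - \<sigma> * xi s x \<ge> 0"
    proof (rule minimum_principle[of t "\<lambda>s y. envelope B0 K s - \<sigma> * xi s y" "envelope B0 K t + B"
          "\<lambda>s y. - (\<sigma> * xix s y)" "\<lambda>s y. (2 * K + 1) * (envelope B0 K s + 1) - \<sigma> * xi_t s y" L])
      show "continuous_on2 ({0..t} \<times> UNIV) (\<lambda>s y. envelope B0 K s - \<sigma> * xi s y)"
        using restrict_to_closed_strip[OF xi_C1(1) \<open>t < T\<close>]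
        unfolding envelope_def by (intro continuous_intros)
      show "\<bar>envelope B0 K s' - \<sigma> * xi s' y\<bar> \<le> envelope B0 K t + B" if "s' \<in> {0..t}" for s' y
      proof -
        have "0 \<le> envelope B0 K s'" "envelope B0 K s' \<le> envelope B0 K t"
          using envelope_ge[OF \<open>K \<ge> 0\<close> \<open>B0 \<ge> 0\<close>, of s'] envelope_mono[OF \<open>K \<ge> 0\<close> \<open>B0 \<ge> 0\<close>, of s' t]
            \<open>B0 \<ge> 0\<close> that by auto
        moreover have "\<bar>\<sigma> * xi s' y\<bar> \<le> B" using B[OF that, of y] sign by (auto simp: abs_mult)
        ultimately show ?thesis by linarith
      qed
      show "((\<lambda>y. envelope B0 K s' - \<sigma> * xi s' y) has_real_derivative - (\<sigma> * xix s' y)) (at y)"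
        if "0 < s'" "s' \<le> t" for s' y
        using that \<open>t < T\<close> by (auto intro!: derivative_eq_intros xi_C1(4))
      show "((\<lambda>s. envelope B0 K s - \<sigma> * xi s y) has_real_derivative
          (2 * K + 1) * (envelope B0 K s' + 1) - \<sigma> * xi_t s' y) (at s')"
        if "0 < s'" "s' \<le> t" for s' y
        using that \<open>t < T\<close> by (intro DERIV_diff envelope_DERIV DERIV_cmult DERIV_xi_t) auto
    qed (use init \<open>0 < t\<close> s L in \<open>auto simp: envelope_def\<close>)
    then show ?thesis by simp
  qed
  also have "\<dots> \<le> envelope B0 K t" using envelope_mono[OF \<open>K \<ge> 0\<close> \<open>B0 \<ge> 0\<close>] s by simp
  finally show ?thesis unfolding K_def .
qed

end

text \<open>With sigma on both sides of the bound, sigma = -1 turns it into the lower bound of the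
  second part of the theorem.\<close>

lemma signed_gradient_estimates:
  fixes f :: "real \<Rightarrow> real \<Rightarrow> real" and rho0 u0 :: "real \<Rightarrow> real"
  assumes D: "smooth_partials D" "D 0 0 = f" and sign: "\<sigma> = 1 \<or> \<sigma> = -1"
    and rho0_reg: "C1b rho0" and u0_reg: "C2b u0"
    and rho0: "\<forall>x. rho0 x \<ge> 0" and e0: "\<forall>x. deriv u0 x + rho0 x \<ge> 0"
    and f_u: "\<forall>r\<ge>0. \<forall>v. deriv (\<lambda>w. f r w) v \<le> 0"
  shows "(\<forall>x. \<sigma> * deriv rho0 x \<ge> 0) \<and> (\<forall>x. \<sigma> * (deriv (deriv u0) x + deriv rho0 x) \<ge> 0) \<and>
     (\<forall>r\<ge>0. \<forall>v. \<sigma> * deriv (\<lambda>s. deriv (\<lambda>q. q * f q v) s) r \<ge> 0) \<and>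
     (\<forall>r\<ge>0. \<forall>v. \<sigma> * deriv (\<lambda>w. deriv (\<lambda>z. f r z) w) v \<le> 0)
     \<longrightarrow> (\<exists>\<Phi> :: real \<Rightarrow> real \<Rightarrow> real \<Rightarrow> real.
          \<forall>T rho u. classical_solution f T rho0 u0 rho u \<and> extra_regular T rho u \<longrightarrow>
            (\<forall>t\<in>{0..<T}. \<forall>x. \<sigma> * px rho t x \<ge> 0 \<and> \<sigma> * px (efun rho u) t x \<ge> 0) \<and>
            (\<forall>t\<in>{0..<T}. \<forall>M. (\<forall>s\<in>{0..t}. \<forall>x. \<bar>rho s x\<bar> \<le> M \<and> \<bar>u s x\<bar> \<le> M \<and>
                                   \<bar>px u s x\<bar> \<le> M \<and> \<bar>px (efun rho u) s x\<bar> \<le> M)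
               \<longrightarrow> (\<forall>s\<in>{0..t}. \<forall>x. \<sigma> * px rho s x \<le> \<sigma> * \<Phi> T t M)))"
proof (intro impI, elim conjE)
  assume xi0: "\<forall>x. \<sigma> * deriv rho0 x \<ge> 0"
    and eta0: "\<forall>x. \<sigma> * (deriv (deriv u0) x + deriv rho0 x) \<ge> 0"
    and f_RR: "\<forall>r\<ge>0. \<forall>v. \<sigma> * deriv (\<lambda>s. deriv (\<lambda>q. q * f q v) s) r \<ge> 0"
    and f_uu: "\<forall>r\<ge>0. \<forall>v. \<sigma> * deriv (\<lambda>w. deriv (\<lambda>z. f r z) w) v \<le> 0"
  obtain B0 where B0: "\<forall>x. \<bar>deriv rho0 x\<bar> \<le> B0"
    using rho0_reg unfolding C1b_def bounded_iff by auto
  have deriv_e0: "deriv (\<lambda>y. deriv u0 y + rho0 y) x = deriv (deriv u0) x + deriv rho0 x" for x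
    using rho0_reg u0_reg unfolding C2b_def C1b_def
    by (intro DERIV_imp_deriv DERIV_add) (auto simp: DERIV_deriv_iff_real_differentiable)
  have "\<forall>T rho u. classical_solution f T rho0 u0 rho u \<and> extra_regular T rho u \<longrightarrow>
      (\<forall>t\<in>{0..<T}. \<forall>x. \<sigma> * px rho t x \<ge> 0 \<and> \<sigma> * px (efun rho u) t x \<ge> 0) \<and>
      (\<forall>t\<in>{0..<T}. \<forall>M. (\<forall>s\<in>{0..t}. \<forall>x. \<bar>rho s x\<bar> \<le> M \<and> \<bar>u s x\<bar> \<le> M \<and>
                             \<bar>px u s x\<bar> \<le> M \<and> \<bar>px (efun rho u) s x\<bar> \<le> M)
         \<longrightarrow> (\<forall>s\<in>{0..t}. \<forall>x. \<sigma> * px rho s x \<le> \<sigma> * (\<sigma> * envelope B0 (coeff_bound D M) t)))"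
  proof (intro allI impI, elim conjE)
    fix T rho u assume "classical_solution f T rho0 u0 rho u" "extra_regular T rho u"
    then interpret smooth_solution D T rho0 u0 rho u
      using D by unfold_locales simp_all
    have \<sigma>\<sigma>: "\<sigma> * \<sigma> = 1" using sign by auto
    have hyps: "\<forall>x. \<sigma> * xi 0 x \<ge> 0" "\<forall>x. \<sigma> * eta 0 x \<ge> 0"
      "\<forall>r\<ge>0. \<forall>v. D 0 1 r v \<le> 0" "\<forall>r\<ge>0. \<forall>v. \<sigma> * D 0 2 r v \<le> 0"
      "\<forall>r\<ge>0. \<forall>v. \<sigma> * (2 * D 1 0 r v + r * D 2 0 r v) \<ge> 0"
      using xi0 eta0 f_u f_uu f_RR unfolding D(2)[symmetric]
      by (simp_all add: xi_init eta_init deriv_e0 deriv_snd_partial[OF D(1)] deriv2_flux_partial[OF D(1)]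
          numeral_2_eq_2)
    show "(\<forall>t\<in>{0..<T}. \<forall>x. \<sigma> * px rho t x \<ge> 0 \<and> \<sigma> * px (efun rho u) t x \<ge> 0) \<and>
      (\<forall>t\<in>{0..<T}. \<forall>M. (\<forall>s\<in>{0..t}. \<forall>x. \<bar>rho s x\<bar> \<le> M \<and> \<bar>u s x\<bar> \<le> M \<and>
                             \<bar>px u s x\<bar> \<le> M \<and> \<bar>px (efun rho u) s x\<bar> \<le> M)
         \<longrightarrow> (\<forall>s\<in>{0..t}. \<forall>x. \<sigma> * px rho s x \<le> \<sigma> * (\<sigma> * envelope B0 (coeff_bound D M) t)))"
      using xi_eta_signed_nonneg[OF sign rho0 e0 hyps(1-4)]
        xi_signed_upper_bound[OF sign rho0 e0 hyps(1,2) B0 hyps(3-5)]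
      unfolding xi_def eta_def e_def ux_def mult.assoc[symmetric] \<sigma>\<sigma> by auto
  qed
  then show "\<exists>\<Phi>. \<forall>T rho u. classical_solution f T rho0 u0 rho u \<and> extra_regular T rho u \<longrightarrow>
      (\<forall>t\<in>{0..<T}. \<forall>x. \<sigma> * px rho t x \<ge> 0 \<and> \<sigma> * px (efun rho u) t x \<ge> 0) \<and>
      (\<forall>t\<in>{0..<T}. \<forall>M. (\<forall>s\<in>{0..t}. \<forall>x. \<bar>rho s x\<bar> \<le> M \<and> \<bar>u s x\<bar> \<le> M \<and>
                             \<bar>px u s x\<bar> \<le> M \<and> \<bar>px (efun rho u) s x\<bar> \<le> M)
         \<longrightarrow> (\<forall>s\<in>{0..t}. \<forall>x. \<sigma> * px rho s x \<le> \<sigma> * \<Phi> T t M))"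
    by (intro exI[of _ "\<lambda>T t M. \<sigma> * envelope B0 (coeff_bound D M) t"])
qed

theorem mainTheorem16:
  fixes f :: "real \<Rightarrow> real \<Rightarrow> real" and rho0 u0 :: "real \<Rightarrow> real"
  assumes f_smooth: "smooth2 f"
    and fu_nonpos: "\<forall>r\<ge>0. \<forall>v. deriv (\<lambda>w. f r w) v \<le> 0"
    and rho0_reg: "C1b rho0" and u0_reg: "C2b u0"
    and rho0_nonneg: "\<forall>x. rho0 x \<ge> 0"
    and e0_nonneg: "\<forall>x. deriv u0 x + rho0 x \<ge> 0"
  shows
   "((\<forall>x. deriv rho0 x \<ge> 0) \<and> (\<forall>x. deriv (deriv u0) x + deriv rho0 x \<ge> 0) \<and>
     (\<forall>r\<ge>0. \<forall>v. deriv (\<lambda>s. deriv (\<lambda>q. q * f q v) s) r \<ge> 0) \<and>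
     (\<forall>r\<ge>0. \<forall>v. deriv (\<lambda>w. deriv (\<lambda>z. f r z) w) v \<le> 0)
     \<longrightarrow> (\<exists>\<Phi> :: real \<Rightarrow> real \<Rightarrow> real \<Rightarrow> real.
          \<forall>T rho u. classical_solution f T rho0 u0 rho u \<and> extra_regular T rho u \<longrightarrow>
            (\<forall>t\<in>{0..<T}. \<forall>x. px rho t x \<ge> 0 \<and> px (efun rho u) t x \<ge> 0) \<and>
            (\<forall>t\<in>{0..<T}. \<forall>M. (\<forall>s\<in>{0..t}. \<forall>x. \<bar>rho s x\<bar> \<le> M \<and> \<bar>u s x\<bar> \<le> M \<and>
                                   \<bar>px u s x\<bar> \<le> M \<and> \<bar>px (efun rho u) s x\<bar> \<le> M)
               \<longrightarrow> (\<forall>s\<in>{0..t}. \<forall>x. px rho s x \<le> \<Phi> T t M)))) \<and>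
    ((\<forall>x. deriv rho0 x \<le> 0) \<and> (\<forall>x. deriv (deriv u0) x + deriv rho0 x \<le> 0) \<and>
     (\<forall>r\<ge>0. \<forall>v. deriv (\<lambda>s. deriv (\<lambda>q. q * f q v) s) r \<le> 0) \<and>
     (\<forall>r\<ge>0. \<forall>v. deriv (\<lambda>w. deriv (\<lambda>z. f r z) w) v \<ge> 0)
     \<longrightarrow> (\<exists>\<Phi> :: real \<Rightarrow> real \<Rightarrow> real \<Rightarrow> real.
          \<forall>T rho u. classical_solution f T rho0 u0 rho u \<and> extra_regular T rho u \<longrightarrow>
            (\<forall>t\<in>{0..<T}. \<forall>x. px rho t x \<le> 0 \<and> px (efun rho u) t x \<le> 0) \<and>
            (\<forall>t\<in>{0..<T}. \<forall>M. (\<forall>s\<in>{0..t}. \<forall>x. \<bar>rho s x\<bar> \<le> M \<and> \<bar>u s x\<bar> \<le> M \<and>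
                                   \<bar>px u s x\<bar> \<le> M \<and> \<bar>px (efun rho u) s x\<bar> \<le> M)
               \<longrightarrow> (\<forall>s\<in>{0..t}. \<forall>x. \<Phi> T t M \<le> px rho s x))))"
proof -
  obtain D where "smooth_partials D" "D 0 0 = f"
    using smooth2_obtain_partials[OF f_smooth] by metis
  note estimates = signed_gradient_estimates[OF this _ rho0_reg u0_reg rho0_nonneg e0_nonneg fu_nonpos]
  have le_minus_iff_add: "a \<le> - b \<longleftrightarrow> a + b \<le> 0" for a b :: real by linarith
  show ?thesis
    using estimates[of 1] estimates[of "-1"] by (simp add: le_minus_iff_add add.commute)
qed

end
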